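(* Assume $q>2$. In $K_\infty$: $$\zeta_C^\star(q-1,1)=\zeta_C(q-1,1)+\zeta_C(1)^q=\zeta_C(1)\zeta_C(q-1)-\zeta_C(1,q-1)=\zeta_C(1)\left(\zeta_C(q-1)-\frac{\zeta_C(1)^{q-1}}{\theta-\theta^q}\right),$$ and this value equals $\sum_{d\ge0}\Big(\sum_{a\in A^+(d)}a^{-q}C_a\Big)(1)$.
   Context: $A=\mathbb{F}_q[\theta]$, $A^+(d)$ monic polynomials of degree $d$, $K_\infty=\mathbb{F}_q((1/\theta))$. $\zeta_C(n)=\sum_{a\in A^+}a^{-n}$; $\zeta_C(n_1,n_2)=\sum_{\deg a_1>\deg a_2}a_1^{-n_1}a_2^{-n_2}$ ($a_i\in A^+$); $\zeta_C^\star(n_1,n_2)=\sum_{\deg a_1\ge\deg a_2}a_1^{-n_1}a_2^{-n_2}$. $K\{\tau\}$ is the skew polynomial ring over $K=\mathbb{F}_q(\theta)$ with $\tau c=c^q\tau$; $C_a$ is the Carlitz module ($\mathbb{F}_q$-algebra homomorphism $A\to K\{\tau\}$ with $C_\theta=\theta+\tau$); for $f=\sum_if_i\tau^i\in K\{\tau\}$, $f(1)=\sum_if_i$. *)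

theory Defs
  imports "HOL-Computational_Algebra.Polynomial" "HOL-Computational_Algebra.Formal_Laurent_Series"
begin

text \<open>Base field F_q: a finite field type 'a, q = CARD('a).
  A = F_q[theta] is 'a poly.  K_infinity = F_q((1/theta)) is 'a fls, the formal Laurent
  series in the variable X = 1/theta; the library metric on 'a fls is the (1/theta)-adic one,
  i.e. the topology of K_infinity.  theta itself is X^(-1).\<close>

definition theta :: "'a::field fls" where
  "theta = fls_X_inv"

definition A_to_Kinf :: "'a::field poly \<Rightarrow> 'a fls" where
  "A_to_Kinf p = (\<Sum>i\<le>degree p. fls_const (coeff p i) * theta ^ i)"

definition monic_deg :: "nat \<Rightarrow> 'a::field poly set" where
  "monic_deg d = {a. degree a = d \<and> lead_coeff a = 1}"

definition pow_sum :: "nat \<Rightarrow> nat \<Rightarrow> 'a::{finite,field} fls" where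
  "pow_sum n d = (\<Sum>a\<in>monic_deg d. inverse (A_to_Kinf a) ^ n)"

definition zetaC :: "nat \<Rightarrow> 'a::{finite,field} fls" where
  "zetaC n = (\<Sum>d. pow_sum n d)"

definition zetaC2 :: "nat \<Rightarrow> nat \<Rightarrow> 'a::{finite,field} fls" where
  "zetaC2 n1 n2 = (\<Sum>d. pow_sum n1 d * (\<Sum>e<d. pow_sum n2 e))"

definition zetaC2_star :: "nat \<Rightarrow> nat \<Rightarrow> 'a::{finite,field} fls" where
  "zetaC2_star n1 n2 = (\<Sum>d. pow_sum n1 d * (\<Sum>e\<le>d. pow_sum n2 e))"

text \<open>Skew polynomials sum_i f_i tau^i with coefficients in K (taken inside K_infinity),
  represented by their coefficient sequence nat => 'a fls (finite support).
  Multiplication uses tau c = c^q tau.\<close>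
type_synonym 'a skew = "nat \<Rightarrow> 'a fls"

definition skew_mult :: "nat \<Rightarrow> 'a::field skew \<Rightarrow> 'a skew \<Rightarrow> 'a skew" where
  "skew_mult q f g = (\<lambda>k. \<Sum>i\<le>k. f i * (g (k - i)) ^ (q ^ i))"

definition skew_one :: "'a::field skew" where
  "skew_one = (\<lambda>i. if i = 0 then 1 else 0)"

definition skew_scal :: "'a::field fls \<Rightarrow> 'a skew \<Rightarrow> 'a skew" where
  "skew_scal c f = (\<lambda>i. c * f i)"

definition skew_eval :: "'a::field skew \<Rightarrow> 'a fls" where
  "skew_eval f = (\<Sum>i | f i \<noteq> 0. f i)"

definition carlitz_theta :: "'a::field skew" where
  "carlitz_theta = (\<lambda>i. if i = 0 then theta else if i = 1 then 1 else 0)"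

definition carlitz :: "'a::{finite,field} poly \<Rightarrow> 'a skew" where
  "carlitz a = (\<lambda>k. \<Sum>i\<le>degree a. fls_const (coeff a i) *
                  ((skew_mult (card (UNIV :: 'a set)) carlitz_theta ^^ i) skew_one) k)"

definition skew_sum :: "('b \<Rightarrow> 'a::field skew) \<Rightarrow> 'b set \<Rightarrow> 'a skew" where
  "skew_sum F S = (\<lambda>k. \<Sum>x\<in>S. F x k)"

end

theory Submission
  imports Defs "HOL-Library.Cardinality"
begin

text \<open>
  Write \<open>S\<^sub>d(n) = \<Sum>a\<in>A\<^sup>+(d). a\<^sup>-\<^sup>n\<close>. Summing over the coefficients of \<open>a\<close> one at a time, with
  \<open>\<Sum>c\<in>\<bbbF>\<^sub>q. 1/(t + c) = -1/(t\<^sup>q - t)\<close> and Carlitz's \<open>\<bbbF>\<^sub>q\<close>-linear polynomials \<open>e\<^sub>d\<close>, gives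
  \<open>S\<^sub>d(q - 1) = S\<^sub>d(1)\<^sup>q\<^sup>-\<^sup>1\<close> and \<open>S\<^sub>d\<^sub>+\<^sub>1(1) = -S\<^sub>d(1)/[d+1]\<close>. Hence \<open>S\<^sub>d(q - 1) S\<^sub>d(1) = S\<^sub>d(q)\<close>, so the
  diagonal terms in \<open>\<zeta>\<^sup>\<star>(q - 1, 1)\<close> and in the product \<open>\<zeta>(1) \<zeta>(q - 1)\<close> add up to \<open>\<zeta>(q) = \<zeta>(1)\<^sup>q\<close>;
  and \<open>\<Sum>\<^sub>e\<^sub>\<le>\<^sub>d S\<^sub>e(q - 1) = S\<^sub>d(q - 1) [d+1]/[1]\<close> telescopes \<open>\<zeta>(1, q - 1)\<close> into \<open>\<zeta>(1)\<^sup>q/(\<theta> - \<theta>\<^sup>q)\<close>.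
  For the last identity, \<open>C\<^sub>a(1) = \<Sum>\<^sub>j e\<^sub>j(a)/D\<^sub>j\<close>, and \<open>\<Sum>\<^sub>a a\<^sup>-\<^sup>q e\<^sub>j(a)\<close> only sees the linear
  coefficient of \<open>e\<^sub>j\<close> because \<open>\<Sum>\<^sub>a a\<^sup>q\<^sup>^\<^sup>k\<^sup>-\<^sup>1 = 0\<close> for \<open>k < d\<close>; this makes the \<open>d\<close>-th term of the Carlitz
  series equal to \<open>S\<^sub>d(q - 1) \<Sum>\<^sub>e\<^sub>\<le>\<^sub>d S\<^sub>e(1)\<close>. All series converge \<open>1/\<theta>\<close>-adically since
  \<open>S\<^sub>d(n)\<close> has valuation \<open>\<ge> d\<close>.
\<close>

section \<open>Finite fields and the Frobenius map\<close>

lemma CARD_field_ge_2: "2 \<le> CARD('a::{finite,field})"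
proof -
  have "card {0::'a, 1} \<le> CARD('a)"
    by (intro card_mono) auto
  thus ?thesis by simp
qed

lemma power_CARD_eq_self: "(c::'a::{finite,field}) ^ CARD('a) = c"
proof (cases "c = 0")
  case True
  thus ?thesis using CARD_field_ge_2[where 'a='a] by simp
next
  case False
  define U where "U = UNIV - {0::'a}"
  have "(\<Prod>x\<in>U. c * x) = (\<Prod>x\<in>U. x)"
    by (rule prod.reindex_bij_witness[of _ "\<lambda>x. x / c" "\<lambda>x. c * x"]) (use False in \<open>auto simp: U_def\<close>)
  moreover have "(\<Prod>x\<in>U. x) \<noteq> 0"
    by (simp add: U_def)
  ultimately have "c ^ (CARD('a) - 1) = 1"
    by (simp add: prod.distrib U_def card_Diff_singleton)
  moreover have "c ^ (CARD('a) - 1) * c = c ^ CARD('a)"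
    using CARD_field_ge_2[where 'a='a] by (intro power_minus_mult) simp
  ultimately show ?thesis
    by simp
qed

lemma power_CARD_power_eq_self: "(c::'a::{finite,field}) ^ (CARD('a) ^ k) = c"
  by (induction k) (simp_all add: power_mult power_CARD_eq_self mult.commute[of "CARD('a)"])

lemma of_nat_CARD_choose_eq_0:
  assumes "0 < k" "k < CARD('a::{finite,field})"
  shows "(of_nat (CARD('a) choose k) :: 'a) = 0"
proof -
  define n where "n = CARD('a)"
  have n2: "n \<ge> 2"
    unfolding n_def by (rule CARD_field_ge_2)
  have "[:1, 1:] ^ n = [:0, 1:] ^ n + (1 :: 'a poly)"
  proof (rule poly_eqI_degree_lead_coeff[where n = n and A = UNIV])
    show "coeff ([:1, 1:] ^ n) n = coeff ([:0, 1:] ^ n + (1 :: 'a poly)) n"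
      using n2 by (simp add: coeff_linear_poly_power)
    show "degree ([:1::'a, 1:] ^ n) \<le> n"
      by (rule order.trans[OF degree_power_le]) simp
    show "degree ([:0::'a, 1:] ^ n + 1) \<le> n"
      by (intro degree_add_le order.trans[OF degree_power_le]) auto
    show "poly ([:1, 1:] ^ n) z = poly ([:0, 1:] ^ n + 1) z" for z :: 'a
      by (simp add: poly_power n_def power_CARD_eq_self add.commute)
  qed (simp add: n_def)
  hence "coeff ([:1, 1:] ^ n) k = coeff ([:0, 1:] ^ n + (1 :: 'a poly)) k"
    by simp
  moreover have "(0::'a) ^ (CARD('a) - k) = 0"
    using assms by simp
  ultimately show ?thesis
    using assms by (simp add: n_def coeff_linear_poly_power coeff_1)
qed

lemma of_nat_CARD_eq_0: "(of_nat CARD('a) :: 'a::{finite,field}) = 0"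
proof -
  have "(\<Sum>c\<in>UNIV. c + 1) = (\<Sum>c\<in>(UNIV::'a set). c)"
    by (rule sum.reindex_bij_witness[of _ "\<lambda>x. x - 1" "\<lambda>x. x + 1"]) auto
  thus ?thesis
    by (simp add: sum.distrib)
qed

lemma fls_of_nat_CARD_eq_0: "(of_nat CARD('a) :: 'a::{finite,field} fls) = 0"
  by (simp add: fls_of_nat of_nat_CARD_eq_0)

lemma frob_add:
  fixes x y :: "'a::{finite,field} fls"
  shows "(x + y) ^ CARD('a) = x ^ CARD('a) + y ^ CARD('a)"
proof -
  define n where "n = CARD('a)"
  define f where "f k = of_nat (n choose k) * x ^ k * y ^ (n - k)" for k
  have "(x + y) ^ n = (\<Sum>k\<le>n. f k)"
    unfolding f_def by (rule binomial_ring)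
  also have "\<dots> = (\<Sum>k\<in>{0, n}. f k)"
  proof (rule sum.mono_neutral_right)
    show "\<forall>k\<in>{..n} - {0, n}. f k = 0"
      using of_nat_CARD_choose_eq_0[where 'a='a] by (auto simp: f_def n_def fls_of_nat)
  qed auto
  also have "\<dots> = x ^ n + y ^ n"
    using CARD_field_ge_2[where 'a='a] by (simp add: f_def n_def)
  finally show ?thesis
    unfolding n_def .
qed

lemma frob_sum:
  fixes f :: "'b \<Rightarrow> 'a::{finite,field} fls"
  shows "(\<Sum>i\<in>A. f i) ^ CARD('a) = (\<Sum>i\<in>A. f i ^ CARD('a))"
  using CARD_field_ge_2[where 'a='a]
  by (induction A rule: infinite_finite_induct) (simp_all add: frob_add)

lemma frob_diff:
  fixes x y :: "'a::{finite,field} fls"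
  shows "(x - y) ^ CARD('a) = x ^ CARD('a) - y ^ CARD('a)"
  using frob_add[of "x - y" y] by (simp add: eq_diff_eq)

lemma frob_const: "fls_const (c::'a::{finite,field}) ^ CARD('a) = fls_const c"
  by (simp flip: fls_const_power add: power_CARD_eq_self)

lemma frob_cmult:
  fixes x :: "'a::{finite,field} fls"
  shows "(fls_const c * x) ^ CARD('a) = fls_const c * x ^ CARD('a)"
  by (simp add: power_mult_distrib frob_const)

lemma uminus_power_CARD_minus_1:
  fixes x :: "'a::{finite,field} fls"
  shows "(- x) ^ (CARD('a) - 1) = x ^ (CARD('a) - 1)"
proof -
  have "(- 1 :: 'a fls) ^ CARD('a) = - 1"
    using frob_diff[of "0 :: 'a fls" 1] CARD_field_ge_2[where 'a='a] by simp
  hence "(- 1 :: 'a fls) ^ (CARD('a) - 1) = 1"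
    using CARD_field_ge_2[where 'a='a] power_minus_mult[of "CARD('a)" "- 1 :: 'a fls"] by simp
  thus ?thesis
    by (simp add: power_minus[of x])
qed

lemma frob_power_add:
  fixes x y :: "'a::{finite,field} fls"
  shows "(x + y) ^ (CARD('a) ^ j) = x ^ (CARD('a) ^ j) + y ^ (CARD('a) ^ j)"
  by (induction j) (simp_all add: power_mult frob_add mult.commute[of "CARD('a)"])

lemma frob_power_diff:
  fixes x y :: "'a::{finite,field} fls"
  shows "(x - y) ^ (CARD('a) ^ j) = x ^ (CARD('a) ^ j) - y ^ (CARD('a) ^ j)"
  by (induction j) (simp_all add: power_mult frob_diff mult.commute[of "CARD('a)"])

lemma frob_power_cmult:
  fixes x :: "'a::{finite,field} fls"
  shows "(fls_const c * x) ^ (CARD('a) ^ j) = fls_const c * x ^ (CARD('a) ^ j)"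
  by (induction j) (simp_all add: power_mult frob_cmult mult.commute[of "CARD('a)"])

lemma frob_power_const: "fls_const (c::'a::{finite,field}) ^ (CARD('a) ^ j) = fls_const c"
  by (simp flip: fls_const_power add: power_CARD_power_eq_self)

section \<open>Sums over the translates \<open>t + c\<close>, \<open>c \<in> \<bbbF>\<^sub>q\<close>\<close>

lemma prod_linear_factors_fls:
  "(\<Prod>c\<in>UNIV. [:fls_const c, 1:]) = (monom 1 CARD('a) - monom 1 1 :: 'a::{finite,field} fls poly)"
proof (rule poly_eqI_degree_lead_coeff[where n = "CARD('a)" and A = "range (\<lambda>c. - fls_const c)"])
  have q2: "CARD('a) \<ge> 2"
    by (rule CARD_field_ge_2)
  have deg: "degree (\<Prod>c\<in>UNIV. [:fls_const c, 1::'a fls:]) = CARD('a)"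
    by (subst degree_prod_eq_sum_degree) auto
  show "degree (\<Prod>c\<in>UNIV. [:fls_const c, 1::'a fls:]) \<le> CARD('a)"
    using deg by simp
  show "degree (monom 1 CARD('a) - monom 1 1 :: 'a fls poly) \<le> CARD('a)"
    by (intro degree_diff_le order.trans[OF degree_monom_le]) (use q2 in auto)
  have "lead_coeff (\<Prod>c\<in>UNIV. [:fls_const c, 1::'a fls:]) = 1"
    by (simp add: lead_coeff_prod)
  thus "coeff (\<Prod>c\<in>UNIV. [:fls_const c, 1::'a fls:]) CARD('a)
      = coeff (monom 1 CARD('a) - monom 1 1) CARD('a)"
    using q2 deg by (simp add: coeff_monom coeff_diff)
  show "CARD('a) \<le> card (range (\<lambda>c::'a. - fls_const c))"
    by (subst card_image) (auto simp: inj_on_def dest: arg_cong[of _ _ "\<lambda>f. fls_nth f 0"])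
  fix z assume "z \<in> range (\<lambda>c::'a. - fls_const c)"
  then obtain c where z: "z = - fls_const c"
    by blast
  have "poly (\<Prod>c\<in>UNIV. [:fls_const c, 1:]) z = 0"
    by (auto simp: z poly_prod intro!: prod_zero bexI[of _ c])
  moreover have "z ^ CARD('a) = z"
    using frob_diff[of 0 "fls_const c"] q2 by (simp add: z frob_const)
  ultimately show "poly (\<Prod>c\<in>UNIV. [:fls_const c, 1:]) z = poly (monom 1 CARD('a) - monom 1 1) z"
    by (simp add: poly_monom)
qed

lemma prod_add_const: "(\<Prod>c\<in>UNIV. t + fls_const c) = t ^ CARD('a) - (t :: 'a::{finite,field} fls)"
  using arg_cong[OF prod_linear_factors_fls, of "\<lambda>p. poly p t"]
  by (simp add: poly_prod poly_monom add.commute)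

lemma sum_prod_add_const_remove:
  "(\<Sum>c\<in>UNIV. \<Prod>c'\<in>UNIV - {c}. t + fls_const c') = (- 1 :: 'a::{finite,field} fls)"
proof -
  have "pderiv (\<Prod>c\<in>UNIV. [:fls_const c, 1:]) = (\<Sum>c\<in>UNIV. \<Prod>c'\<in>UNIV - {c}. [:fls_const c', 1::'a fls:])"
    by (simp add: pderiv_prod pderiv_pCons)
  moreover have "pderiv (\<Prod>c\<in>UNIV. [:fls_const c, 1:]) = (- 1 :: 'a fls poly)"
    using CARD_field_ge_2[where 'a='a]
    by (simp add: prod_linear_factors_fls pderiv_diff pderiv_monom fls_of_nat_CARD_eq_0)
  ultimately have "(\<Sum>c\<in>UNIV. \<Prod>c'\<in>UNIV - {c}. [:fls_const c', 1::'a fls:]) = - 1"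
    by simp
  hence "poly (\<Sum>c\<in>UNIV. \<Prod>c'\<in>UNIV - {c}. [:fls_const c', 1::'a fls:]) t = - 1"
    by simp
  thus ?thesis
    by (simp add: poly_sum poly_prod add.commute)
qed

lemma add_const_nonzero:
  fixes t :: "'a::{finite,field} fls"
  assumes "t ^ CARD('a) \<noteq> t"
  shows "t + fls_const c \<noteq> 0"
  using assms prod_add_const[of t] by (metis UNIV_I finite right_minus_eq prod_zero_iff)

lemma eq_const_if_frob_fixed:
  fixes t :: "'a::{finite,field} fls"
  assumes "t ^ CARD('a) = t"
  obtains e where "t = fls_const e"
proof -
  have "(\<Prod>c\<in>UNIV. t + fls_const c) = 0"
    using assms by (simp add: prod_add_const)
  then obtain c where "t + fls_const c = 0"
    by auto
  thus ?thesis
    using that[of "- c"] by (simp add: eq_neg_iff_add_eq_0)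
qed

text \<open>Logarithmic derivative of \<open>\<Prod>c (t + c) = t^q - t\<close>.\<close>

lemma sum_inverse_add_const:
  fixes t :: "'a::{finite,field} fls"
  assumes "t ^ CARD('a) \<noteq> t"
  shows "(\<Sum>c\<in>UNIV. inverse (t + fls_const c)) = - inverse (t ^ CARD('a) - t)"
proof -
  define P where "P = (\<Prod>c\<in>UNIV. t + fls_const c)"
  have P: "P = t ^ CARD('a) - t"
    unfolding P_def by (rule prod_add_const)
  have "inverse (t + fls_const c) = (\<Prod>c'\<in>UNIV - {c}. t + fls_const c') / P" for c
  proof -
    define R where "R = (\<Prod>c'\<in>UNIV - {c}. t + fls_const c')"
    have e: "P = (t + fls_const c) * R"
      unfolding P_def R_def by (simp add: prod.remove)
    moreover have "P \<noteq> 0"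
      using assms P by simp
    ultimately show ?thesis
      unfolding R_def[symmetric] by (simp add: divide_inverse inverse_mult_distrib)
  qed
  hence "(\<Sum>c\<in>UNIV. inverse (t + fls_const c)) = (\<Sum>c\<in>UNIV. \<Prod>c'\<in>UNIV - {c}. t + fls_const c') / P"
    by (simp add: sum_divide_distrib)
  thus ?thesis
    by (simp add: sum_prod_add_const_remove P divide_inverse)
qed

lemma inverse_power_minus_1:
  fixes x :: "'b::field"
  assumes "x \<noteq> 0" "0 < n"
  shows "inverse x ^ (n - 1) = x / x ^ n"
  using assms by (simp add: power_inverse power_diff)

lemma add_divide_self:
  fixes x :: "'b::field"
  assumes "x \<noteq> 0"
  shows "(x + y) / x = 1 + y * inverse x"
  using assms by (simp add: divide_inverse distrib_right)

text \<open>
  Since \<open>(t + c)\<^sup>q\<^sup>^\<^sup>k = t\<^sup>q\<^sup>^\<^sup>k + c\<close>, the powers \<open>(t + c)\<^sup>\<plusminus>\<^sup>(\<^sup>q\<^sup>^\<^sup>k\<^sup>-\<^sup>1\<^sup>)\<close> below are a constant plus a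
  multiple of some \<open>1/(t' + c)\<close>, so both sums reduce to the previous lemma.
\<close>

lemma sum_inverse_add_const_power_CARD_minus_1:
  fixes t :: "'a::{finite,field} fls"
  assumes "t ^ CARD('a) \<noteq> t"
  shows "(\<Sum>c\<in>UNIV. inverse (t + fls_const c) ^ (CARD('a) - 1))
       = inverse (t ^ CARD('a) - t) ^ (CARD('a) - 1)"
proof -
  define q where "q = CARD('a)"
  have q2: "q \<ge> 2"
    unfolding q_def by (rule CARD_field_ge_2)
  define u where "u = t ^ q"
  define s where "s = t ^ q - t"
  have s0: "s \<noteq> 0"
    using assms unfolding s_def q_def by simp
  have uq: "u ^ q - u = s ^ q"
    unfolding u_def s_def q_def by (simp add: frob_diff)
  hence u: "u ^ q \<noteq> u"
    using s0 by auto
  have "inverse (t + fls_const c) ^ (q - 1) = 1 + (t - u) * inverse (u + fls_const c)" for c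
  proof -
    have "(t + fls_const c) ^ q = u + fls_const c"
      unfolding u_def q_def by (simp add: frob_add frob_const)
    moreover have "t + fls_const c \<noteq> 0" "u + fls_const c \<noteq> 0"
      using add_const_nonzero assms u unfolding q_def by blast+
    ultimately have "inverse (t + fls_const c) ^ (q - 1) = ((u + fls_const c) + (t - u)) / (u + fls_const c)"
      using q2 inverse_power_minus_1[of "t + fls_const c" q] by simp
    also have "\<dots> = 1 + (t - u) * inverse (u + fls_const c)"
      using \<open>u + fls_const c \<noteq> 0\<close> by (rule add_divide_self)
    finally show ?thesis .
  qed
  hence "(\<Sum>c\<in>UNIV. inverse (t + fls_const c) ^ (q - 1))
      = of_nat q + (t - u) * (\<Sum>c\<in>UNIV. inverse (u + fls_const c))"
    by (simp add: sum.distrib sum_distrib_left q_def)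
  also have "\<dots> = s * inverse (s ^ q)"
  proof -
    have "t - u = - s"
      by (simp add: s_def u_def)
    thus ?thesis
      using sum_inverse_add_const[OF u[unfolded q_def]] uq fls_of_nat_CARD_eq_0[where 'a='a]
      unfolding q_def by simp
  qed
  also have "\<dots> = inverse s ^ (q - 1)"
    using inverse_power_minus_1[OF s0, of q] q2 by (simp add: divide_inverse)
  finally show ?thesis
    unfolding q_def s_def .
qed

lemma fls_const_sum: "fls_const (\<Sum>i\<in>A. f i) = (\<Sum>i\<in>A. fls_const (f i))"
  by (rule fls_eqI) (simp add: fls_nth_sum)

lemma sum_add_power_CARD_power_minus_1:
  "(\<Sum>c\<in>UNIV. (e + c) ^ (CARD('a) ^ m - 1)) = (if m = 0 then 0 else - 1 :: 'a::{finite,field})"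
proof -
  have "(\<Sum>c\<in>UNIV. (e + c) ^ (CARD('a) ^ m - 1)) = (\<Sum>c\<in>UNIV. c ^ (CARD('a) ^ m - 1))"
    by (rule sum.reindex_bij_witness[of _ "\<lambda>x. x - e" "\<lambda>x. x + e"]) (auto simp: add.commute)
  also have "\<dots> = (if m = 0 then 0 else - 1)"
  proof (cases "m = 0")
    case False
    define n where "n = CARD('a) ^ m - 1"
    have "CARD('a) \<le> CARD('a) ^ m"
      using False CARD_field_ge_2[where 'a='a] by (simp add: self_le_power)
    hence n: "0 < n"
      using CARD_field_ge_2[where 'a='a] by (simp add: n_def)
    have "c ^ n = (if c = 0 then 0 else 1)" for c :: 'a
    proof (cases "c = 0")
      case False
      have "c ^ n * c = c ^ (CARD('a) ^ m)"
        unfolding n_def by (rule power_minus_mult) (use n in \<open>simp add: n_def\<close>)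
      thus ?thesis
        using False by (simp add: power_CARD_power_eq_self)
    qed (use n in simp)
    hence "(\<Sum>c\<in>(UNIV::'a set). c ^ n) = of_nat (card (UNIV - {0::'a}))"
      by (simp add: sum.If_cases Int_absorb1 Diff_eq Compl_eq)
    also have "\<dots> = of_nat CARD('a) - 1"
      using CARD_field_ge_2[where 'a='a] by (simp add: card_Diff_singleton of_nat_diff)
    finally show ?thesis
      using False by (simp add: n_def of_nat_CARD_eq_0)
  qed (simp add: of_nat_CARD_eq_0)
  finally show ?thesis .
qed

lemma frob_power_telescope:
  fixes t :: "'a::{finite,field} fls"
  shows "t ^ (CARD('a) ^ k) - t = (\<Sum>j<k. (t ^ CARD('a) - t) ^ (CARD('a) ^ j))"
proof (induction k)
  case (Suc k)
  have "(t ^ CARD('a) - t) ^ (CARD('a) ^ k) = t ^ (CARD('a) ^ Suc k) - t ^ (CARD('a) ^ k)"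
    by (simp add: frob_power_diff power_mult[symmetric])
  thus ?case
    by (simp add: Suc.IH[symmetric])
qed simp

lemma sum_add_const_power_CARD_power_minus_1:
  fixes t :: "'a::{finite,field} fls"
  shows "(\<Sum>c\<in>UNIV. (t + fls_const c) ^ (CARD('a) ^ k - 1))
        = - (\<Sum>j<k. (t ^ CARD('a) - t) ^ (CARD('a) ^ j - 1))"
proof (cases "t ^ CARD('a) = t")
  case True
  then obtain e where e: "t = fls_const e"
    by (rule eq_const_if_frob_fixed)
  have "(\<Sum>c\<in>UNIV. (t + fls_const c) ^ (CARD('a) ^ k - 1)) = fls_const (if k = 0 then 0 else - 1)"
    unfolding e fls_plus_const fls_const_power[symmetric] fls_const_sum[symmetric]
      sum_add_power_CARD_power_minus_1 ..
  moreover have "(0 :: 'a fls) ^ (CARD('a) ^ j - 1) = (if j = 0 then 1 else 0)" for j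
    using CARD_field_ge_2[where 'a='a] one_less_power[of "CARD('a)" j] by (cases "j = 0") auto
  ultimately show ?thesis
    using True by (simp add: sum.delta)
next
  case False
  define q where "q = CARD('a)"
  have qk: "0 < q ^ k"
    using CARD_field_ge_2[where 'a='a] by (simp add: q_def)
  have "(t + fls_const c) ^ (q ^ k - 1) = 1 + (t ^ (q ^ k) - t) * inverse (t + fls_const c)" for c
  proof -
    have "(t + fls_const c) ^ (q ^ k - 1) = (t + fls_const c) ^ (q ^ k) / (t + fls_const c)"
      using power_diff[of "t + fls_const c" 1 "q ^ k"] qk add_const_nonzero[OF False] by simp
    also have "(t + fls_const c) ^ (q ^ k) = (t + fls_const c) + (t ^ (q ^ k) - t)"
      unfolding q_def by (simp add: frob_power_add frob_power_const)
    also have "\<dots> / (t + fls_const c) = 1 + (t ^ (q ^ k) - t) * inverse (t + fls_const c)"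
      using add_const_nonzero[OF False] by (rule add_divide_self)
    finally show ?thesis .
  qed
  hence "(\<Sum>c\<in>UNIV. (t + fls_const c) ^ (q ^ k - 1))
      = of_nat q + (t ^ (q ^ k) - t) * (\<Sum>c\<in>UNIV. inverse (t + fls_const c))"
    by (simp add: sum.distrib sum_distrib_left q_def)
  also have "\<dots> = - (\<Sum>j<k. (t ^ q - t) ^ (q ^ j) / (t ^ q - t))"
    using sum_inverse_add_const[OF False] fls_of_nat_CARD_eq_0
    unfolding frob_power_telescope[of t k, folded q_def]
    by (simp add: sum_distrib_right divide_inverse q_def)
  also have "\<dots> = - (\<Sum>j<k. (t ^ q - t) ^ (q ^ j - 1))"
    using False CARD_field_ge_2[where 'a='a] by (simp add: power_diff q_def)
  finally show ?thesis
    unfolding q_def .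
qed

lemma sum_add_const_mult_power_CARD_power_minus_1:
  fixes y w :: "'a::{finite,field} fls"
  assumes "w \<noteq> 0"
  shows "(\<Sum>c\<in>UNIV. (y + fls_const c * w) ^ (CARD('a) ^ k - 1))
       = - (w ^ (CARD('a) ^ k - 1) * (\<Sum>j<k. ((y / w) ^ CARD('a) - y / w) ^ (CARD('a) ^ j - 1)))"
proof -
  have "y + fls_const c * w = w * (y / w + fls_const c)" for c
    using assms by (simp add: field_simps)
  hence "(\<Sum>c\<in>UNIV. (y + fls_const c * w) ^ (CARD('a) ^ k - 1))
      = w ^ (CARD('a) ^ k - 1) * (\<Sum>c\<in>UNIV. (y / w + fls_const c) ^ (CARD('a) ^ k - 1))"
    by (simp add: power_mult_distrib sum_distrib_left)
  thus ?thesis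
    unfolding sum_add_const_power_CARD_power_minus_1 by simp
qed

section \<open>The \<open>\<bbbF>\<^sub>q\<close>-linear polynomials \<open>e\<^sub>i\<close>\<close>

definition carlitz_bracket :: "nat \<Rightarrow> 'a::{finite,field} fls" where
  "carlitz_bracket n = theta ^ (CARD('a) ^ n) - theta"

text \<open>
  \<open>carlitz_e i\<close> is Carlitz's \<open>\<bbbF>\<^sub>q\<close>-linear polynomial \<open>e\<^sub>i(x) = \<Prod>(x - a)\<close> over the \<open>a \<in> A\<close> of
  degree \<open>< i\<close>, given by its coefficients at \<open>x\<^sup>q\<^sup>^\<^sup>j\<close>, and \<open>carlitz_D i = e\<^sub>i(\<theta>\<^sup>i)\<close> is the Carlitz
  factorial \<open>D\<^sub>i\<close>. Only the recursion \<open>e\<^sub>i\<^sub>+\<^sub>1 = e\<^sub>i\<^sup>q - D\<^sub>i\<^sup>q\<^sup>-\<^sup>1 e\<^sub>i\<close>, built into \<open>e_coeff\<close>, is used.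
\<close>

fun e_coeff :: "nat \<Rightarrow> nat \<Rightarrow> 'a::{finite,field} fls" where
  "e_coeff 0 = (\<lambda>j. if j = 0 then 1 else 0)"
| "e_coeff (Suc i) = (\<lambda>j. (if j = 0 then 0 else e_coeff i (j - 1) ^ CARD('a))
      - (\<Sum>k\<le>i. e_coeff i k * (theta ^ i) ^ (CARD('a) ^ k)) ^ (CARD('a) - 1) * e_coeff i j)"

definition carlitz_e :: "nat \<Rightarrow> 'a::{finite,field} fls \<Rightarrow> 'a fls" where
  "carlitz_e i x = (\<Sum>j\<le>i. e_coeff i j * x ^ (CARD('a) ^ j))"

definition carlitz_D :: "nat \<Rightarrow> 'a::{finite,field} fls" where
  "carlitz_D i = carlitz_e i (theta ^ i)"

lemma e_coeff_eq_0: "i < j \<Longrightarrow> e_coeff i j = (0::'a::{finite,field} fls)"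
  by (induction i arbitrary: j) (use CARD_field_ge_2[where 'a='a] in simp_all)

lemma e_coeff_Suc:
  "e_coeff (Suc i) j = (if j = 0 then 0 else e_coeff i (j - 1) ^ CARD('a))
      - carlitz_D i ^ (CARD('a) - 1) * (e_coeff i j :: 'a::{finite,field} fls)"
  by (simp add: carlitz_D_def carlitz_e_def)

declare e_coeff.simps(2) [simp del]

lemma carlitz_e_0 [simp]: "carlitz_e 0 x = x"
  by (simp add: carlitz_e_def)

lemma carlitz_D_0 [simp]: "carlitz_D 0 = 1"
  by (simp add: carlitz_D_def)

lemma carlitz_e_Suc:
  fixes x :: "'a::{finite,field} fls"
  shows "carlitz_e (Suc i) x = carlitz_e i x ^ CARD('a) - carlitz_D i ^ (CARD('a) - 1) * carlitz_e i x"
proof -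
  define q where "q = CARD('a)"
  have "carlitz_e (Suc i) x = (\<Sum>j\<le>Suc i. (if j = 0 then 0 else e_coeff i (j - 1) ^ q) * x ^ (q ^ j))
      - carlitz_D i ^ (q - 1) * (\<Sum>j\<le>Suc i. e_coeff i j * x ^ (q ^ j))"
    unfolding carlitz_e_def e_coeff_Suc q_def
    by (simp add: left_diff_distrib sum_subtractf sum_distrib_left mult.assoc del: sum.atMost_Suc)
  also have "(\<Sum>j\<le>Suc i. e_coeff i j * x ^ (q ^ j)) = carlitz_e i x"
    by (simp add: carlitz_e_def q_def e_coeff_eq_0)
  also have "(\<Sum>j\<le>Suc i. (if j = 0 then 0 else e_coeff i (j - 1) ^ q) * x ^ (q ^ j))
      = (\<Sum>j\<le>i. (e_coeff i j * x ^ (q ^ j)) ^ q)"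
    by (subst sum.atMost_Suc_shift) (simp add: power_mult_distrib mult.commute flip: power_mult)
  also have "\<dots> = carlitz_e i x ^ q"
    by (simp add: carlitz_e_def q_def frob_sum)
  finally show ?thesis
    unfolding q_def .
qed

lemma carlitz_e_add: "carlitz_e i (x + y) = carlitz_e i x + carlitz_e i (y::'a::{finite,field} fls)"
  by (simp add: carlitz_e_def frob_power_add distrib_left sum.distrib)

lemma carlitz_e_cmult: "carlitz_e i (fls_const c * x) = fls_const c * carlitz_e i (x::'a::{finite,field} fls)"
  by (simp add: carlitz_e_def frob_power_cmult sum_distrib_left mult.left_commute)

lemma carlitz_e_zero [simp]: "carlitz_e i 0 = (0::'a::{finite,field} fls)"
  using CARD_field_ge_2[where 'a='a] by (simp add: carlitz_e_def power_0_left)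

lemma carlitz_e_sum: "carlitz_e i (\<Sum>k\<in>K. f k) = (\<Sum>k\<in>K. carlitz_e i (f k :: 'a::{finite,field} fls))"
  by (induction K rule: infinite_finite_induct) (simp_all add: carlitz_e_add)

lemma carlitz_e_theta_power: "j < i \<Longrightarrow> carlitz_e i (theta ^ j) = (0::'a::{finite,field} fls)"
proof (induction i)
  case (Suc i)
  show ?case
  proof (cases "j < i")
    case True
    thus ?thesis
      using Suc CARD_field_ge_2[where 'a='a] by (simp add: carlitz_e_Suc)
  next
    case False
    hence "j = i"
      using Suc by simp
    have "carlitz_D i ^ (CARD('a) - 1) * carlitz_D i = (carlitz_D i :: 'a fls) ^ CARD('a)"
      using CARD_field_ge_2[where 'a='a] by (intro power_minus_mult) simp
    thus ?thesis
      by (simp add: \<open>j = i\<close> carlitz_e_Suc flip: carlitz_D_def)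
  qed
qed simp

lemma carlitz_D_Suc_if_theta_mult:
  fixes i :: nat
  assumes "carlitz_e (Suc i) (theta * theta ^ i) = theta * carlitz_e (Suc i) (theta ^ i)
      + carlitz_bracket (Suc i) * (carlitz_e i (theta ^ i) :: 'a::{finite,field} fls) ^ CARD('a)"
  shows "carlitz_D (Suc i) = carlitz_bracket (Suc i) * (carlitz_D i :: 'a fls) ^ CARD('a)"
  using assms carlitz_e_theta_power[of i "Suc i", where 'a='a] by (simp add: carlitz_D_def)

lemma carlitz_e_Suc_theta_mult:
  fixes x :: "'a::{finite,field} fls"
  shows "carlitz_e (Suc i) (theta * x) = theta * carlitz_e (Suc i) x + carlitz_bracket (Suc i) * carlitz_e i x ^ CARD('a)"
proof (induction i arbitrary: x)
  case 0
  show ?case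
    by (simp add: carlitz_e_Suc carlitz_bracket_def power_mult_distrib algebra_simps)
next
  case (Suc i)
  define q where "q = CARD('a)"
  have q2: "q \<ge> 2"
    unfolding q_def by (rule CARD_field_ge_2)
  define u where "u = carlitz_e (Suc i) x"
  define w where "w = carlitz_e i x"
  define B where "B = (carlitz_bracket (Suc i) :: 'a fls)"
  define Z where "Z = ((carlitz_D i :: 'a fls) ^ (q - 1)) ^ q"
  have D: "carlitz_D (Suc i) ^ (q - 1) = B ^ (q - 1) * Z"
    using carlitz_D_Suc_if_theta_mult[OF Suc.IH]
    by (simp add: B_def Z_def q_def power_mult_distrib mult.commute flip: power_mult)
  have u_q: "u ^ q = (w ^ q) ^ q - Z * w ^ q"
    using carlitz_e_Suc[of i x]
    by (simp add: u_def w_def Z_def q_def frob_diff power_mult_distrib)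
  have B_q: "B ^ q = B ^ (q - 1) * B"
    using power_minus_mult[of q B] q2 by simp
  have theta_q: "carlitz_bracket (Suc (Suc i)) = B ^ q + theta ^ q - (theta :: 'a fls)"
    by (simp add: B_def carlitz_bracket_def q_def frob_diff mult.commute flip: power_mult)
  have "carlitz_e (Suc (Suc i)) (theta * x)
      = (theta * u + B * w ^ q) ^ q - carlitz_D (Suc i) ^ (q - 1) * (theta * u + B * w ^ q)"
    unfolding carlitz_e_Suc[of "Suc i"] Suc.IH by (simp add: u_def w_def B_def q_def)
  also have "\<dots> = theta ^ q * u ^ q + B ^ q * (w ^ q) ^ q - B ^ (q - 1) * Z * (theta * u + B * w ^ q)"
    unfolding D by (simp add: q_def frob_add power_mult_distrib)
  also have "\<dots> = theta * (u ^ q - B ^ (q - 1) * Z * u) + (B ^ q + theta ^ q - theta) * u ^ q"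
    unfolding u_q B_q by (simp add: algebra_simps)
  also have "\<dots> = theta * carlitz_e (Suc (Suc i)) x + carlitz_bracket (Suc (Suc i)) * u ^ q"
    unfolding carlitz_e_Suc[of "Suc i" x] u_def[symmetric] q_def[symmetric] D theta_q by simp
  finally show ?case
    by (simp add: u_def q_def)
qed

lemma carlitz_D_Suc: "carlitz_D (Suc i) = carlitz_bracket (Suc i) * (carlitz_D i :: 'a::{finite,field} fls) ^ CARD('a)"
  by (rule carlitz_D_Suc_if_theta_mult[OF carlitz_e_Suc_theta_mult])

lemma carlitz_bracket_nonzero: "0 < n \<Longrightarrow> carlitz_bracket n \<noteq> (0::'a::{finite,field} fls)"
proof
  assume n: "0 < n" and "carlitz_bracket n = (0::'a fls)"
  hence "fls_nth (carlitz_bracket n :: 'a fls) (- int (CARD('a) ^ n)) = 0"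
    by simp
  moreover have "int (CARD('a) ^ n) \<noteq> 1"
    using n CARD_field_ge_2[where 'a='a] one_less_power[of "CARD('a)" n] by linarith
  ultimately show False
    by (simp add: carlitz_bracket_def theta_def)
qed

lemma carlitz_D_nonzero: "carlitz_D i \<noteq> (0::'a::{finite,field} fls)"
  by (induction i) (simp_all add: carlitz_D_Suc carlitz_bracket_nonzero)

section \<open>Sums over the monic polynomials of degree \<open>d\<close>\<close>

lemma A_to_Kinf_eq_sum:
  assumes "\<And>i. N \<le> i \<Longrightarrow> coeff p i = 0"
  shows "A_to_Kinf p = (\<Sum>i<N. fls_const (coeff p i) * theta ^ i)"
proof -
  have "A_to_Kinf p = (\<Sum>i<max N (Suc (degree p)). fls_const (coeff p i) * theta ^ i)"
    unfolding A_to_Kinf_def by (rule sum.mono_neutral_cong_left) (auto simp: coeff_eq_0)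
  also have "\<dots> = (\<Sum>i<N. fls_const (coeff p i) * theta ^ i)"
    by (rule sum.mono_neutral_cong_right) (use assms in auto)
  finally show ?thesis .
qed

lemma A_to_Kinf_add: "A_to_Kinf (p + r) = A_to_Kinf p + A_to_Kinf (r :: 'a::field poly)"
proof -
  define N where "N = Suc (max (degree p) (degree r))"
  have "i \<ge> N \<Longrightarrow> coeff p i = 0" "i \<ge> N \<Longrightarrow> coeff r i = 0" for i
    by (simp_all add: N_def coeff_eq_0)
  thus ?thesis
    by (simp add: A_to_Kinf_eq_sum[of N] sum.distrib distrib_right flip: fls_plus_const)
qed

lemma A_to_Kinf_monom: "A_to_Kinf (monom c d) = fls_const c * (theta ^ d :: 'a::field fls)"
  by (simp add: A_to_Kinf_eq_sum[of "Suc d"] coeff_monom)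

lemma A_to_Kinf_monic:
  assumes "a \<in> monic_deg d"
  shows "A_to_Kinf a = theta ^ d + (\<Sum>i<d. fls_const (coeff a i) * theta ^ i)"
proof -
  have "degree a = d" "coeff a d = 1"
    using assms by (auto simp: monic_deg_def)
  thus ?thesis
    by (simp add: A_to_Kinf_eq_sum[of "Suc d"] coeff_eq_0)
qed

lemma carlitz_e_monic: "a \<in> monic_deg d \<Longrightarrow> carlitz_e d (A_to_Kinf a) = (carlitz_D d :: 'a::{finite,field} fls)"
  by (simp add: A_to_Kinf_monic carlitz_e_add carlitz_e_sum carlitz_e_cmult carlitz_e_theta_power
      carlitz_D_def)

lemma A_to_Kinf_monic_nonzero: "a \<in> monic_deg d \<Longrightarrow> A_to_Kinf a \<noteq> (0::'a::{finite,field} fls)"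
  using carlitz_e_monic[of a d] carlitz_D_nonzero[of d, where 'a='a] by force

definition polys_deg_lt :: "nat \<Rightarrow> 'a::zero poly set" where
  "polys_deg_lt d = {p. \<forall>i\<ge>d. coeff p i = 0}"

lemma bij_betw_polys_deg_lt_Suc:
  "bij_betw (\<lambda>(c, v). v + monom c d) (UNIV \<times> polys_deg_lt d) (polys_deg_lt (Suc d) :: 'a::comm_ring_1 poly set)"
proof (rule bij_betwI[where g = "\<lambda>p. (coeff p d, p - monom (coeff p d) d)"])
  show "(\<lambda>(c, v). v + monom c d) \<in> UNIV \<times> polys_deg_lt d \<rightarrow> (polys_deg_lt (Suc d) :: 'a poly set)"
    by (auto simp: polys_deg_lt_def coeff_monom)
  show "(\<lambda>p. (coeff p d, p - monom (coeff p d) d)) \<in> polys_deg_lt (Suc d) \<rightarrow> UNIV \<times> (polys_deg_lt d :: 'a poly set)"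
    by (auto simp: polys_deg_lt_def coeff_monom)
qed (auto simp: polys_deg_lt_def coeff_monom)

lemma sum_polys_deg_lt_Suc:
  "(\<Sum>p\<in>polys_deg_lt (Suc d). f p) = (\<Sum>c\<in>(UNIV::'a::{finite,comm_ring_1} set). \<Sum>v\<in>polys_deg_lt d. f (v + monom c d))"
  by (simp add: sum.reindex_bij_betw[OF bij_betw_polys_deg_lt_Suc, symmetric] sum.cartesian_product split_def)

lemma monic_deg_eq_image: "monic_deg d = (\<lambda>v. monom 1 d + v) ` (polys_deg_lt d :: 'a::field poly set)"
proof (intro equalityI subsetI)
  fix p :: "'a poly"
  assume "p \<in> monic_deg d"
  hence "p - monom 1 d \<in> polys_deg_lt d"
    by (auto simp: monic_deg_def polys_deg_lt_def coeff_monom coeff_eq_0 le_neq_implies_less)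
  thus "p \<in> (\<lambda>v. monom 1 d + v) ` polys_deg_lt d"
    by (auto intro!: image_eqI[of _ _ "p - monom 1 d"])
next
  fix p :: "'a poly"
  assume "p \<in> (\<lambda>v. monom 1 d + v) ` polys_deg_lt d"
  then obtain v where v: "v \<in> polys_deg_lt d" "p = monom 1 d + v"
    by blast
  hence "coeff p d = 1" "\<forall>i>d. coeff p i = 0"
    by (auto simp: polys_deg_lt_def coeff_monom)
  hence "degree p = d"
    by (metis degree_le le_antisym le_degree one_neq_zero leI)
  thus "p \<in> monic_deg d"
    using \<open>coeff p d = 1\<close> by (simp add: monic_deg_def)
qed

text \<open>
  \<open>span_sum g ws x\<close> sums \<open>g\<close> over the affine \<open>\<bbbF>\<^sub>q\<close>-span of \<open>ws\<close> through \<open>x\<close>, counting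
  every combination of the \<open>ws\<close> separately.
\<close>

fun span_sum :: "('a::{finite,field} fls \<Rightarrow> 'a fls) \<Rightarrow> 'a fls list \<Rightarrow> 'a fls \<Rightarrow> 'a fls" where
  "span_sum g [] x = g x"
| "span_sum g (w # ws) x = (\<Sum>c\<in>UNIV. span_sum g ws (x + fls_const c * w))"

fun theta_powers :: "nat \<Rightarrow> 'a::field fls list" where
  "theta_powers 0 = []"
| "theta_powers (Suc d) = theta ^ d # theta_powers d"

lemma length_theta_powers [simp]: "length (theta_powers d) = d"
  by (induction d) auto

lemma sum_polys_deg_lt_eq_span_sum:
  "(\<Sum>v\<in>polys_deg_lt d. g (x + A_to_Kinf v)) = span_sum g (theta_powers d) (x :: 'a::{finite,field} fls)"
proof (induction d arbitrary: x)
  case 0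
  have "polys_deg_lt 0 = {0 :: 'a poly}"
    by (auto simp: polys_deg_lt_def poly_eq_iff)
  thus ?case
    by (simp add: A_to_Kinf_def)
next
  case (Suc d)
  thus ?case
    by (simp add: sum_polys_deg_lt_Suc A_to_Kinf_add A_to_Kinf_monom add_ac flip: Suc.IH)
qed

lemma sum_monic_eq_span_sum:
  "(\<Sum>a\<in>monic_deg d. g (A_to_Kinf a)) = span_sum g (theta_powers d) (theta ^ d :: 'a::{finite,field} fls)"
proof -
  have "inj_on (\<lambda>v. monom 1 d + v) (polys_deg_lt d :: 'a poly set)"
    by (auto simp: inj_on_def)
  thus ?thesis
    by (simp add: monic_deg_eq_image sum.reindex A_to_Kinf_add A_to_Kinf_monom
        flip: sum_polys_deg_lt_eq_span_sum)
qed

lemma span_sum_swap: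
  "span_sum g (w # ws) x = span_sum (\<lambda>y. \<Sum>c\<in>UNIV. g (y + fls_const c * w)) ws x"
proof (induction ws arbitrary: x)
  case (Cons u us)
  have "span_sum g (w # u # us) x
      = (\<Sum>c\<in>UNIV. \<Sum>e\<in>UNIV. span_sum g us (x + fls_const c * w + fls_const e * u))"
    by simp
  also have "\<dots> = (\<Sum>e\<in>UNIV. \<Sum>c\<in>UNIV. span_sum g us (x + fls_const e * u + fls_const c * w))"
    by (subst sum.swap) (simp add: add_ac)
  also have "\<dots> = span_sum (\<lambda>y. \<Sum>c\<in>UNIV. g (y + fls_const c * w)) (u # us) x"
    using Cons.IH by simp
  finally show ?case .
qed simp

lemma span_sum_cmult: "span_sum (\<lambda>y. a * g y) ws x = a * span_sum g ws x"
  by (induction ws arbitrary: x) (simp_all add: sum_distrib_left)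

lemma span_sum_sum: "span_sum (\<lambda>y. \<Sum>j\<in>J. g j y) ws x = (\<Sum>j\<in>J. span_sum (g j) ws x)"
  by (induction ws arbitrary: x) (simp_all add: sum.swap[of _ J])

lemma span_sum_map:
  assumes "\<And>a b. M (a + b) = M a + M b" and "\<And>c a. M (fls_const c * a) = fls_const c * M a"
  shows "span_sum (\<lambda>y. g (M y)) ws x = span_sum g (map M ws) (M x)"
  by (induction ws arbitrary: x) (simp_all add: assms)

section \<open>The power sums \<open>S\<^sub>d(1)\<close>, \<open>S\<^sub>d(q - 1)\<close> and \<open>S\<^sub>d(q)\<close>\<close>

text \<open>
  For \<open>w \<noteq> 0\<close>, summing first over the multiples of \<open>w\<close> turns \<open>y\<^sup>q\<^sup>^\<^sup>k\<^sup>-\<^sup>1\<close> into a combination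
  of the powers \<open>M(y)\<^sup>q\<^sup>^\<^sup>j\<^sup>-\<^sup>1\<close>, \<open>j < k\<close>, of the \<open>\<bbbF>\<^sub>q\<close>-linear map \<open>M(y) = (y/w)\<^sup>q - y/w\<close>;
  the remaining sum is then a span sum over the shorter list \<open>map M ws\<close>.
\<close>

lemma span_sum_power_vanish:
  "k < length ws \<Longrightarrow> span_sum (\<lambda>y. y ^ (CARD('a) ^ k - 1)) ws (x :: 'a::{finite,field} fls) = 0"
proof (induction "length ws" arbitrary: ws x k)
  case (Suc n)
  then obtain w ws' where ws: "ws = w # ws'" "length ws' = n"
    by (cases ws) auto
  show ?case
  proof (cases "w = 0")
    case True
    thus ?thesis
      using fls_of_nat_CARD_eq_0[where 'a='a] by (simp add: ws span_sum_swap)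
  next
    case False
    define M where "M y = (y / w) ^ CARD('a) - y / w" for y
    have M_add: "M (a + b) = M a + M b" for a b
      by (simp add: M_def add_divide_distrib frob_add)
    have M_cmult: "M (fls_const c * a) = fls_const c * M a" for c a
      by (simp add: M_def frob_cmult right_diff_distrib flip: times_divide_eq_right)
    have M_map: "span_sum (\<lambda>z. M z ^ n) ws' x = span_sum (\<lambda>z. z ^ n) (map M ws') (M x)" for n
      using span_sum_map[of M "\<lambda>z. z ^ n", OF M_add M_cmult] by simp
    define a where "a = - (w ^ (CARD('a) ^ k - 1))"
    have "span_sum (\<lambda>y. y ^ (CARD('a) ^ k - 1)) ws x
        = span_sum (\<lambda>y. a * (\<Sum>j<k. M y ^ (CARD('a) ^ j - 1))) ws' x"
      unfolding ws span_sum_swap sum_add_const_mult_power_CARD_power_minus_1[OF False] a_def M_def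
      by simp
    also have "\<dots> = a * (\<Sum>j<k. span_sum (\<lambda>z. z ^ (CARD('a) ^ j - 1)) (map M ws') (M x))"
      by (simp add: span_sum_cmult span_sum_sum M_map)
    also have "\<dots> = 0"
      using Suc ws by simp
    finally show ?thesis .
  qed
qed simp

lemma sum_inverse_add_const_power:
  fixes t :: "'a::{finite,field} fls"
  assumes "t ^ CARD('a) \<noteq> t" and "k = 1 \<or> k = CARD('a) - 1"
  shows "(\<Sum>c\<in>UNIV. inverse (t + fls_const c) ^ k) = (- inverse (t ^ CARD('a) - t)) ^ k"
  using assms(2)
proof
  assume "k = CARD('a) - 1"
  thus ?thesis
    using sum_inverse_add_const_power_CARD_minus_1[OF assms(1)]
      uminus_power_CARD_minus_1[of "inverse (t ^ CARD('a) - t)"] by simp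
qed (simp add: sum_inverse_add_const[OF assms(1)])

lemma carlitz_e_Suc_factor:
  fixes x :: "'a::{finite,field} fls" and d :: nat
  defines "t \<equiv> carlitz_e d x / carlitz_D d"
  shows "carlitz_e (Suc d) x = carlitz_D d ^ CARD('a) * (t ^ CARD('a) - t)"
proof -
  have "carlitz_D d ^ CARD('a) * t = carlitz_D d ^ (CARD('a) - 1) * carlitz_e d x"
    using carlitz_D_nonzero[of d, where 'a='a] CARD_field_ge_2[where 'a='a]
    by (simp add: t_def power_diff)
  thus ?thesis
    using carlitz_D_nonzero[of d, where 'a='a]
    by (simp add: carlitz_e_Suc right_diff_distrib t_def power_divide)
qed

text \<open>
  Adding \<open>c \<theta>\<^sup>d\<close> shifts \<open>e\<^sub>d\<close> by \<open>c D\<^sub>d\<close>, and \<open>e\<^sub>d\<^sub>+\<^sub>1 = D\<^sub>d\<^sup>q (t\<^sup>q - t)\<close> for \<open>t = e\<^sub>d/D\<^sub>d\<close>, so each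
  coefficient sum is an instance of \<open>sum_inverse_add_const_power\<close>.
\<close>

lemma span_sum_inverse_power:
  fixes x :: "'a::{finite,field} fls"
  assumes "k = 1 \<or> k = CARD('a) - 1" and "carlitz_e d x \<noteq> 0"
  shows "span_sum (\<lambda>y. inverse y ^ k) (theta_powers d) x = (e_coeff d 0 / carlitz_e d x) ^ k"
  using assms(2)
proof (induction d arbitrary: x)
  case (Suc d)
  define D where "D = (carlitz_D d :: 'a fls)"
  have D0: "D \<noteq> 0"
    unfolding D_def by (rule carlitz_D_nonzero)
  define t where "t = carlitz_e d x / D"
  have E: "carlitz_e (Suc d) x = D ^ CARD('a) * (t ^ CARD('a) - t)"
    unfolding D_def t_def by (rule carlitz_e_Suc_factor)
  hence tq: "t ^ CARD('a) \<noteq> t"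
    using Suc.prems by auto
  have shift: "carlitz_e d (x + fls_const c * theta ^ d) = D * (t + fls_const c)" for c
    using D0 by (simp add: carlitz_e_add carlitz_e_cmult t_def field_simps flip: D_def carlitz_D_def)
  have "span_sum (\<lambda>y. inverse y ^ k) (theta_powers (Suc d)) x
      = (\<Sum>c\<in>UNIV. (e_coeff d 0 / (D * (t + fls_const c))) ^ k)"
    using Suc.IH shift D0 add_const_nonzero[OF tq] by simp
  also have "\<dots> = (e_coeff d 0 / D) ^ k * (\<Sum>c\<in>UNIV. inverse (t + fls_const c) ^ k)"
    by (simp add: sum_distrib_left power_mult_distrib divide_inverse inverse_mult_distrib mult_ac)
  also have "\<dots> = (e_coeff d 0 / D * (- inverse (t ^ CARD('a) - t))) ^ k"
    by (simp only: sum_inverse_add_const_power[OF tq assms(1)] power_mult_distrib)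
  also have "e_coeff d 0 / D * (- inverse (t ^ CARD('a) - t)) = e_coeff (Suc d) 0 / carlitz_e (Suc d) x"
    using D0 CARD_field_ge_2[where 'a='a]
    by (simp add: E e_coeff_Suc power_diff divide_inverse inverse_mult_distrib flip: D_def)
  finally show ?case .
qed (simp add: inverse_eq_divide)

lemma pow_sum_eq_span_sum: "pow_sum n d = span_sum (\<lambda>y. inverse y ^ n) (theta_powers d) (theta ^ d)"
  unfolding pow_sum_def by (rule sum_monic_eq_span_sum)

lemma pow_sum_one: "pow_sum 1 d = e_coeff d 0 / (carlitz_D d :: 'a::{finite,field} fls)"
  using span_sum_inverse_power[of 1 d "theta ^ d :: 'a fls"] carlitz_D_nonzero[of d, where 'a='a]
  by (simp add: pow_sum_eq_span_sum carlitz_D_def)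

lemma pow_sum_CARD_minus_1: "pow_sum (CARD('a) - 1) d = (pow_sum 1 d :: 'a::{finite,field} fls) ^ (CARD('a) - 1)"
proof -
  have "pow_sum (CARD('a) - 1) d = (e_coeff d 0 / carlitz_D d :: 'a fls) ^ (CARD('a) - 1)"
    using span_sum_inverse_power[of "CARD('a) - 1" d "theta ^ d :: 'a fls"] carlitz_D_nonzero[of d, where 'a='a]
    by (simp add: pow_sum_eq_span_sum carlitz_D_def)
  thus ?thesis
    unfolding pow_sum_one .
qed

lemma pow_sum_CARD: "pow_sum CARD('a) d = (pow_sum 1 d :: 'a::{finite,field} fls) ^ CARD('a)"
  by (simp add: pow_sum_def frob_sum power_mult[symmetric] mult.commute)

lemma pow_sum_one_0: "pow_sum 1 0 = (1 :: 'a::{finite,field} fls)"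
  unfolding pow_sum_one by simp

lemma pow_sum_one_Suc: "pow_sum 1 (Suc d) = - pow_sum 1 d / (carlitz_bracket (Suc d) :: 'a::{finite,field} fls)"
proof -
  have "carlitz_D d ^ (CARD('a) - 1) / carlitz_D d ^ CARD('a) = inverse (carlitz_D d :: 'a fls)"
    using carlitz_D_nonzero[of d, where 'a='a] CARD_field_ge_2[where 'a='a]
    by (simp add: power_diff divide_inverse)
  thus ?thesis
    unfolding pow_sum_one by (simp add: e_coeff_Suc carlitz_D_Suc divide_inverse inverse_mult_distrib mult_ac)
qed

section \<open>The Carlitz module evaluated at \<open>1\<close>\<close>

definition carlitz_theta_power :: "nat \<Rightarrow> 'a::{finite,field} skew" where
  "carlitz_theta_power i = (skew_mult CARD('a) carlitz_theta ^^ i) skew_one"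

text \<open>The coefficients of \<open>C\<^sub>a\<close> are \<open>e\<^sub>j(a) / D\<^sub>j\<close>, so \<open>C\<^sub>a(1)\<close> is the following sum (for \<open>deg a \<le> N\<close>).\<close>

definition carlitz_eval_one :: "nat \<Rightarrow> 'a::{finite,field} fls \<Rightarrow> 'a fls" where
  "carlitz_eval_one N x = (\<Sum>j\<le>N. carlitz_e j x / carlitz_D j)"

lemma carlitz_theta_power_Suc:
  "(carlitz_theta_power (Suc i) k :: 'a::{finite,field} fls)
     = (if k = 0 then theta * carlitz_theta_power i 0
        else theta * carlitz_theta_power i k + carlitz_theta_power i (k - 1) ^ CARD('a))"
proof -
  have "skew_mult CARD('a) carlitz_theta g k = (\<Sum>j\<in>{0, 1}. carlitz_theta j * g (k - j) ^ (CARD('a) ^ j))"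
    if "k \<noteq> 0" for g :: "'a skew"
    unfolding skew_mult_def using that
    by (intro sum.mono_neutral_cong_right) (auto simp: carlitz_theta_def)
  thus ?thesis
    by (cases "k = 0") (simp_all add: carlitz_theta_power_def skew_mult_def carlitz_theta_def)
qed

lemma carlitz_theta_power_eq_0: "i < k \<Longrightarrow> (carlitz_theta_power i k :: 'a::{finite,field} fls) = 0"
  using CARD_field_ge_2[where 'a='a]
  by (induction i arbitrary: k) (simp_all add: carlitz_theta_power_Suc,
      simp add: carlitz_theta_power_def skew_one_def)

lemma sum_carlitz_theta_power_Suc:
  "(\<Sum>k\<le>Suc i. carlitz_theta_power (Suc i) k)
     = theta * (\<Sum>k\<le>i. carlitz_theta_power i k) + (\<Sum>k\<le>i. carlitz_theta_power i k :: 'a::{finite,field} fls) ^ CARD('a)"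
proof -
  have "(\<Sum>k\<le>Suc i. carlitz_theta_power (Suc i) k)
      = theta * (carlitz_theta_power i 0 + (\<Sum>k\<le>i. carlitz_theta_power i (Suc k)))
        + (\<Sum>k\<le>i. carlitz_theta_power i k ^ CARD('a) :: 'a fls)"
    by (simp add: sum.atMost_Suc_shift[of _ i] carlitz_theta_power_Suc sum.distrib sum_distrib_left
        distrib_left del: sum.atMost_Suc)
  also have "carlitz_theta_power i 0 + (\<Sum>k\<le>i. carlitz_theta_power i (Suc k)) = (\<Sum>k\<le>Suc i. carlitz_theta_power i k :: 'a fls)"
    by (rule sum.atMost_Suc_shift[symmetric])
  also have "\<dots> = (\<Sum>k\<le>i. carlitz_theta_power i k)"
    by (simp add: carlitz_theta_power_eq_0)
  finally show ?thesis
    by (simp add: frob_sum)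
qed

lemma carlitz_eval_one_theta_power:
  "i \<le> N \<Longrightarrow> carlitz_eval_one N (theta ^ i) = carlitz_eval_one i (theta ^ i :: 'a::{finite,field} fls)"
  unfolding carlitz_eval_one_def by (rule sum.mono_neutral_right) (auto simp: carlitz_e_theta_power)

lemma sum_carlitz_theta_power: "(\<Sum>k\<le>i. carlitz_theta_power i k) = carlitz_eval_one i (theta ^ i :: 'a::{finite,field} fls)"
proof (induction i)
  case 0
  thus ?case
    by (simp add: carlitz_eval_one_def carlitz_theta_power_def skew_one_def)
next
  case (Suc i)
  define x where "x = (theta ^ i :: 'a fls)"
  have step: "carlitz_e (Suc j) (theta * x) / carlitz_D (Suc j)
      = theta * (carlitz_e (Suc j) x / carlitz_D (Suc j)) + (carlitz_e j x / carlitz_D j) ^ CARD('a)" for j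
    using carlitz_bracket_nonzero[of "Suc j", where 'a='a] carlitz_D_nonzero[of j, where 'a='a]
    by (simp add: carlitz_e_Suc_theta_mult carlitz_D_Suc field_simps power_mult_distrib power_divide)
  have "carlitz_eval_one (Suc i) (theta * x)
      = theta * (x + (\<Sum>j\<le>i. carlitz_e (Suc j) x / carlitz_D (Suc j))) + carlitz_eval_one i x ^ CARD('a)"
    unfolding carlitz_eval_one_def sum.atMost_Suc_shift step
    by (simp add: sum.distrib sum_distrib_left distrib_left frob_sum)
  also have "x + (\<Sum>j\<le>i. carlitz_e (Suc j) x / carlitz_D (Suc j)) = carlitz_eval_one (Suc i) x"
    unfolding carlitz_eval_one_def by (subst sum.atMost_Suc_shift) simp
  also have "\<dots> = carlitz_eval_one i x"
    unfolding x_def by (rule carlitz_eval_one_theta_power) simp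
  finally have "carlitz_eval_one (Suc i) (theta ^ Suc i) = theta * carlitz_eval_one i x + carlitz_eval_one i x ^ CARD('a)"
    by (simp add: x_def)
  thus ?case
    unfolding sum_carlitz_theta_power_Suc Suc.IH x_def by simp
qed

lemma carlitz_eval_one_add: "carlitz_eval_one N (x + y) = carlitz_eval_one N x + carlitz_eval_one N (y :: 'a::{finite,field} fls)"
  by (simp add: carlitz_eval_one_def carlitz_e_add add_divide_distrib sum.distrib)

lemma carlitz_eval_one_cmult: "carlitz_eval_one N (fls_const c * x) = fls_const c * carlitz_eval_one N (x :: 'a::{finite,field} fls)"
  by (simp add: carlitz_eval_one_def carlitz_e_cmult sum_distrib_left)

lemma carlitz_eval_one_sum: "carlitz_eval_one N (\<Sum>k\<in>K. f k) = (\<Sum>k\<in>K. carlitz_eval_one N (f k :: 'a::{finite,field} fls))"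
  by (induction K rule: infinite_finite_induct) (simp_all add: carlitz_eval_one_add, simp_all add: carlitz_eval_one_def)

lemma carlitz_eq_0: "a \<in> monic_deg d \<Longrightarrow> d < k \<Longrightarrow> carlitz a k = (0::'a::{finite,field} fls)"
  by (auto simp: carlitz_def monic_deg_def carlitz_theta_power_eq_0[unfolded carlitz_theta_power_def]
      intro!: sum.neutral)

lemma sum_carlitz: assumes "a \<in> monic_deg d"
  shows "(\<Sum>k\<le>d. carlitz a k) = carlitz_eval_one d (A_to_Kinf a :: 'a::{finite,field} fls)"
proof -
  have deg: "degree a = d"
    using assms by (simp add: monic_deg_def)
  have "(\<Sum>k\<le>d. carlitz a k) = (\<Sum>i\<le>d. fls_const (coeff a i) * (\<Sum>k\<le>d. carlitz_theta_power i k :: 'a fls))"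
    unfolding carlitz_def carlitz_theta_power_def[symmetric] deg
    by (subst sum.swap) (simp add: sum_distrib_left)
  also have "\<dots> = (\<Sum>i\<le>d. fls_const (coeff a i) * carlitz_eval_one d (theta ^ i))"
  proof (rule sum.cong)
    fix i assume "i \<in> {..d}"
    hence "(\<Sum>k\<le>d. carlitz_theta_power i k :: 'a fls) = (\<Sum>k\<le>i. carlitz_theta_power i k)"
      by (intro sum.mono_neutral_right) (auto simp: carlitz_theta_power_eq_0)
    also have "\<dots> = carlitz_eval_one i (theta ^ i)"
      by (rule sum_carlitz_theta_power)
    also have "\<dots> = carlitz_eval_one d (theta ^ i)"
      using \<open>i \<in> {..d}\<close> by (intro carlitz_eval_one_theta_power[symmetric]) simp
    finally show "fls_const (coeff a i) * (\<Sum>k\<le>d. carlitz_theta_power i k) = fls_const (coeff a i) * carlitz_eval_one d (theta ^ i)"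
      by simp
  qed simp
  also have "\<dots> = carlitz_eval_one d (A_to_Kinf a)"
    unfolding A_to_Kinf_def deg carlitz_eval_one_sum carlitz_eval_one_cmult ..
  finally show ?thesis .
qed

lemma skew_eval_sum_monic:
  "skew_eval (skew_sum (\<lambda>a. skew_scal (inverse (A_to_Kinf a) ^ CARD('a)) (carlitz a)) (monic_deg d))
   = (\<Sum>a\<in>monic_deg d. inverse (A_to_Kinf a) ^ CARD('a) * carlitz_eval_one d (A_to_Kinf a :: 'a::{finite,field} fls))"
proof -
  define f where "f = skew_sum (\<lambda>a. skew_scal (inverse (A_to_Kinf a) ^ CARD('a)) (carlitz a)) (monic_deg d :: 'a poly set)"
  have f: "f k = (\<Sum>a\<in>monic_deg d. inverse (A_to_Kinf a) ^ CARD('a) * carlitz a k)" for k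
    by (simp add: f_def skew_sum_def skew_scal_def)
  have "f k = 0" if "d < k" for k
    using that by (auto simp: f carlitz_eq_0 intro!: sum.neutral)
  hence "skew_eval f = (\<Sum>k\<le>d. f k)"
    unfolding skew_eval_def by (intro sum.mono_neutral_cong_left) (auto simp: not_le[symmetric])
  also have "\<dots> = (\<Sum>a\<in>monic_deg d. inverse (A_to_Kinf a) ^ CARD('a) * (\<Sum>k\<le>d. carlitz a k))"
    unfolding f by (subst sum.swap) (simp add: sum_distrib_left)
  also have "\<dots> = (\<Sum>a\<in>monic_deg d. inverse (A_to_Kinf a) ^ CARD('a) * carlitz_eval_one d (A_to_Kinf a))"
    by (intro sum.cong refl) (simp add: sum_carlitz)
  finally show ?thesis
    unfolding f_def .
qed

lemma sum_monic_power_vanish: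
  assumes "k < d"
  shows "(\<Sum>a\<in>monic_deg d. A_to_Kinf a ^ (CARD('a) ^ k - 1)) = (0::'a::{finite,field} fls)"
proof -
  have "(\<Sum>a\<in>monic_deg d. A_to_Kinf a ^ (CARD('a) ^ k - 1))
      = span_sum (\<lambda>y. y ^ (CARD('a) ^ k - 1)) (theta_powers d) (theta ^ d :: 'a fls)"
    by (rule sum_monic_eq_span_sum)
  also have "\<dots> = 0"
    by (rule span_sum_power_vanish) (simp add: assms)
  finally show ?thesis .
qed

lemma inverse_power_CARD_mult_power:
  fixes y :: "'a::{finite,field} fls"
  assumes "y \<noteq> 0"
  shows "inverse y ^ CARD('a) * y ^ (CARD('a) ^ l)
       = (if l = 0 then inverse y ^ (CARD('a) - 1) else (y ^ (CARD('a) ^ (l - 1) - 1)) ^ CARD('a))"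
proof (cases l)
  case 0
  thus ?thesis
    using inverse_power_minus_1[OF assms, of "CARD('a)"] CARD_field_ge_2[where 'a='a]
    by (simp add: divide_inverse mult.commute power_inverse)
next
  case (Suc m)
  have "y ^ (CARD('a) ^ m - 1) = y ^ (CARD('a) ^ m) * inverse y"
    using assms CARD_field_ge_2[where 'a='a] by (simp add: power_diff divide_inverse)
  thus ?thesis
    by (simp add: Suc power_mult_distrib mult.commute flip: power_mult)
qed

lemma sum_monic_carlitz_e_lt:
  assumes "j < d"
  shows "(\<Sum>a\<in>monic_deg d. inverse (A_to_Kinf a) ^ CARD('a) * carlitz_e j (A_to_Kinf a))
    = e_coeff j 0 * (pow_sum 1 d :: 'a::{finite,field} fls) ^ (CARD('a) - 1)"
proof -
  define T where "T l = (\<Sum>a\<in>monic_deg d. inverse (A_to_Kinf a :: 'a fls) ^ CARD('a) * A_to_Kinf a ^ (CARD('a) ^ l))"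
    for l
  have "T (Suc l) = 0" if "Suc l \<le> j" for l
  proof -
    have "T (Suc l) = (\<Sum>a\<in>monic_deg d. A_to_Kinf a ^ (CARD('a) ^ l - 1)) ^ CARD('a)"
      unfolding T_def frob_sum
      by (intro sum.cong refl) (subst inverse_power_CARD_mult_power; simp add: A_to_Kinf_monic_nonzero)
    also have "(\<Sum>a\<in>monic_deg d. A_to_Kinf a ^ (CARD('a) ^ l - 1)) = (0 :: 'a fls)"
      using that assms by (intro sum_monic_power_vanish) simp
    finally show ?thesis
      using CARD_field_ge_2[where 'a='a] by simp
  qed
  hence "(\<Sum>l<j. e_coeff j (Suc l) * T (Suc l)) = 0"
    by (intro sum.neutral) simp
  moreover have "(\<Sum>a\<in>monic_deg d. inverse (A_to_Kinf a) ^ CARD('a) * carlitz_e j (A_to_Kinf a))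
      = (\<Sum>l\<le>j. e_coeff j l * T l)"
    by (simp add: carlitz_e_def T_def sum_distrib_left sum.swap[of _ "{..j}"] mult_ac)
  ultimately have "(\<Sum>a\<in>monic_deg d. inverse (A_to_Kinf a) ^ CARD('a) * carlitz_e j (A_to_Kinf a)) = e_coeff j 0 * T 0"
    by (simp add: sum.atMost_shift)
  also have "T 0 = pow_sum (CARD('a) - 1) d"
    unfolding T_def pow_sum_def
    by (intro sum.cong refl) (subst inverse_power_CARD_mult_power; simp add: A_to_Kinf_monic_nonzero)
  finally show ?thesis
    by (simp only: pow_sum_CARD_minus_1)
qed

lemma sum_monic_carlitz_e_eq:
  "(\<Sum>a\<in>monic_deg d. inverse (A_to_Kinf a) ^ CARD('a) * carlitz_e d (A_to_Kinf a))
    = carlitz_D d * (pow_sum 1 d :: 'a::{finite,field} fls) ^ CARD('a)"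
  by (simp add: carlitz_e_monic pow_sum_def frob_sum sum_distrib_left mult.commute cong: sum.cong)

lemma sum_monic_carlitz_eval_one:
  "(\<Sum>a\<in>monic_deg d. inverse (A_to_Kinf a) ^ CARD('a) * carlitz_eval_one d (A_to_Kinf a :: 'a::{finite,field} fls))
   = pow_sum (CARD('a) - 1) d * (\<Sum>e\<le>d. pow_sum 1 e)"
proof -
  have "(\<Sum>a\<in>monic_deg d. inverse (A_to_Kinf a) ^ CARD('a) * carlitz_eval_one d (A_to_Kinf a :: 'a fls))
      = (\<Sum>j\<le>d. (\<Sum>a\<in>monic_deg d. inverse (A_to_Kinf a) ^ CARD('a) * carlitz_e j (A_to_Kinf a :: 'a fls)) / carlitz_D j)"
    by (simp add: carlitz_eval_one_def sum_distrib_left sum_divide_distrib sum.swap[of _ "{..d}"] mult_ac)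
  also have "\<dots> = (\<Sum>j<d. e_coeff j 0 / carlitz_D j * pow_sum 1 d ^ (CARD('a) - 1)) + pow_sum 1 d ^ CARD('a)"
    using carlitz_D_nonzero[of d, where 'a='a]
    by (simp add: lessThan_Suc_atMost[symmetric] sum_monic_carlitz_e_lt sum_monic_carlitz_e_eq)
  also have "\<dots> = pow_sum 1 d ^ (CARD('a) - 1) * (\<Sum>e\<le>d. pow_sum 1 e)"
    using CARD_field_ge_2[where 'a='a] power_minus_mult[of "CARD('a)" "pow_sum 1 d :: 'a fls"]
    by (simp add: lessThan_Suc_atMost[symmetric] sum_distrib_right distrib_left mult.commute flip: pow_sum_one)
  finally show ?thesis
    by (simp only: pow_sum_CARD_minus_1)
qed

section \<open>Convergence in \<open>K\<^sub>\<infinity>\<close>\<close>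

text \<open>
  The metric on \<open>fls\<close> comes without limit laws for sums and products, so limits are handled
  through the valuation instead: \<open>val_tendsto\<close> implies \<open>LIMSEQ\<close> (\<open>val_tendsto_LIMSEQ\<close>).
\<close>

definition val_ge :: "int \<Rightarrow> 'a::zero fls \<Rightarrow> bool" where
  "val_ge n x \<longleftrightarrow> (\<forall>j<n. fls_nth x j = 0)"

definition val_tendsto :: "(nat \<Rightarrow> 'a::group_add fls) \<Rightarrow> 'a fls \<Rightarrow> bool" where
  "val_tendsto X L \<longleftrightarrow> (\<forall>N. \<exists>M. \<forall>n\<ge>M. val_ge N (X n - L))"

lemma val_ge_zero [simp]: "val_ge n 0"
  by (simp add: val_ge_def)

lemma val_ge_add: "val_ge n x \<Longrightarrow> val_ge n y \<Longrightarrow> val_ge n (x + (y :: 'a::monoid_add fls))"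
  by (simp add: val_ge_def)

lemma val_ge_diff: "val_ge n x \<Longrightarrow> val_ge n y \<Longrightarrow> val_ge n (x - (y :: 'a::group_add fls))"
  by (simp add: val_ge_def)

lemma val_ge_mono: "val_ge n x \<Longrightarrow> m \<le> n \<Longrightarrow> val_ge m x"
  by (simp add: val_ge_def)

lemma val_ge_sum: "(\<And>i. i \<in> A \<Longrightarrow> val_ge n (f i)) \<Longrightarrow> val_ge n (\<Sum>i\<in>A. f i :: 'a::comm_monoid_add fls)"
  by (induction A rule: infinite_finite_induct) (auto intro: val_ge_add)

lemma val_ge_iff_subdegree: "x \<noteq> 0 \<Longrightarrow> val_ge n x \<longleftrightarrow> n \<le> fls_subdegree x"
  by (auto simp: val_ge_def intro: fls_subdegree_geI)

lemma val_ge_mult: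
  fixes x y :: "'a::field fls"
  assumes "val_ge m x" "val_ge n y"
  shows "val_ge (m + n) (x * y)"
proof (cases "x = 0 \<or> y = 0")
  case False
  thus ?thesis
    using assms by (simp add: val_ge_iff_subdegree)
qed auto

lemma val_ge_power: "val_ge n (x :: 'a::field fls) \<Longrightarrow> val_ge (int k * n) (x ^ k)"
proof (induction k)
  case (Suc k)
  hence "val_ge (n + int k * n) (x * x ^ k)"
    by (intro val_ge_mult) auto
  thus ?case
    by (simp add: algebra_simps)
qed (simp add: val_ge_def)

lemma val_tendsto_LIMSEQ:
  fixes X :: "nat \<Rightarrow> 'a::group_add fls"
  assumes "val_tendsto X L"
  shows "X \<longlonglongrightarrow> L"
proof (rule metric_LIMSEQ_I)
  fix r :: real
  assume r: "0 < r"
  obtain N :: nat where "inverse r < 2 ^ N"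
    using real_arch_pow[of 2 "inverse r"] by auto
  hence N: "inverse (2 ^ N) < r"
    using r by (metis inverse_less_imp_less inverse_inverse_eq positive_imp_inverse_positive)
  obtain M where M: "\<forall>n\<ge>M. val_ge (int N) (X n - L)"
    using assms unfolding val_tendsto_def by blast
  have "dist (X n) L < r" if "n \<ge> M" for n
  proof (cases "X n = L")
    case False
    hence "int N \<le> fls_subdegree (X n - L)"
      using M that by (auto simp: val_ge_def intro: fls_subdegree_geI)
    hence "dist (X n) L \<le> inverse (2 ^ N)"
      using False by (auto simp: dist_fls_def intro!: le_imp_inverse_le power_increasing)
    thus ?thesis
      using N by simp
  qed (use r in simp)
  thus "\<exists>no. \<forall>n\<ge>no. dist (X n) L < r"
    by blast
qed

lemma val_tendsto_unique: "val_tendsto X a \<Longrightarrow> val_tendsto X b \<Longrightarrow> a = (b :: 'a::group_add fls)"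
  using val_tendsto_LIMSEQ LIMSEQ_unique by blast

lemma val_tendsto_add:
  assumes "val_tendsto X a" "val_tendsto Y b"
  shows "val_tendsto (\<lambda>n. X n + Y n) (a + (b :: 'a::ab_group_add fls))"
  unfolding val_tendsto_def
proof
  fix N
  obtain M1 M2 where M: "\<forall>n\<ge>M1. val_ge N (X n - a)" "\<forall>n\<ge>M2. val_ge N (Y n - b)"
    using assms unfolding val_tendsto_def by meson
  have "val_ge N (X n + Y n - (a + b))" if "n \<ge> max M1 M2" for n
  proof -
    have "val_ge N ((X n - a) + (Y n - b))"
      using M that by (auto intro: val_ge_add)
    thus ?thesis
      by (simp add: algebra_simps)
  qed
  thus "\<exists>M. \<forall>n\<ge>M. val_ge N (X n + Y n - (a + b))"
    by blast
qed

lemma val_tendsto_mult: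
  fixes X Y :: "nat \<Rightarrow> 'a::field fls"
  assumes "val_tendsto X a" "val_tendsto Y b" "\<And>n. val_ge 0 (X n)" "val_ge 0 b"
  shows "val_tendsto (\<lambda>n. X n * Y n) (a * b)"
  unfolding val_tendsto_def
proof
  fix N
  obtain M1 M2 where M: "\<forall>n\<ge>M1. val_ge N (X n - a)" "\<forall>n\<ge>M2. val_ge N (Y n - b)"
    using assms(1,2) unfolding val_tendsto_def by meson
  have "val_ge N (X n * Y n - a * b)" if "n \<ge> max M1 M2" for n
  proof -
    have "val_ge (0 + N) (X n * (Y n - b))"
      using assms(3) M that by (intro val_ge_mult) auto
    moreover have "val_ge (N + 0) ((X n - a) * b)"
      using assms(4) M that by (intro val_ge_mult) auto
    ultimately have "val_ge N (X n * (Y n - b) + (X n - a) * b)"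
      by (auto intro: val_ge_add)
    thus ?thesis
      by (simp add: algebra_simps)
  qed
  thus "\<exists>M. \<forall>n\<ge>M. val_ge N (X n * Y n - a * b)"
    by blast
qed

lemma val_tendsto_const: "val_tendsto (\<lambda>n. c) c"
  by (simp add: val_tendsto_def)

lemma val_tendsto_shift: "val_tendsto (\<lambda>n. X (Suc n)) a \<Longrightarrow> val_tendsto X a"
  unfolding val_tendsto_def by (metis Suc_le_D Suc_le_mono)

lemma val_ge_limit:
  assumes "val_tendsto X a" "\<And>n. val_ge n0 (X n)"
  shows "val_ge n0 (a :: 'a::ab_group_add fls)"
proof -
  obtain M where "val_ge n0 (X M - a)"
    using assms(1) unfolding val_tendsto_def by blast
  hence "val_ge n0 (X M - (X M - a))"
    using assms(2) val_ge_diff by blast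
  thus ?thesis
    by simp
qed

lemma val_tendsto_frob:
  fixes X :: "nat \<Rightarrow> 'a::{finite,field} fls"
  assumes "val_tendsto X a"
  shows "val_tendsto (\<lambda>n. X n ^ CARD('a)) (a ^ CARD('a))"
  unfolding val_tendsto_def
proof
  fix N
  obtain M where M: "\<forall>n\<ge>M. val_ge (max N 0) (X n - a)"
    using assms unfolding val_tendsto_def by blast
  have "val_ge N (X n ^ CARD('a) - a ^ CARD('a))" if "n \<ge> M" for n
  proof -
    have "val_ge (int CARD('a) * max N 0) ((X n - a) ^ CARD('a))"
      using M that by (intro val_ge_power) auto
    moreover have "N \<le> int CARD('a) * max N 0"
      using CARD_field_ge_2[where 'a='a] by (cases "N \<le> 0") (auto simp: max_def intro: order.trans[of _ "1 * N"])
    ultimately show ?thesis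
      by (auto simp: frob_diff intro: val_ge_mono)
  qed
  thus "\<exists>M. \<forall>n\<ge>M. val_ge N (X n ^ CARD('a) - a ^ CARD('a))"
    by blast
qed

text \<open>The limit is built coefficientwise: the coefficient of \<open>X\<^sup>j\<close> is constant from the \<open>j\<close>-th partial sum on.\<close>

lemma val_tendsto_suminf:
  fixes f :: "nat \<Rightarrow> 'a::{comm_monoid_add,group_add} fls"
  assumes "\<And>d. val_ge (int d) (f d)"
  shows "val_tendsto (\<lambda>n. \<Sum>i<n. f i) (\<Sum>i. f i)"
proof -
  define g where "g j = fls_nth (\<Sum>i<Suc (nat j). f i) j" for j
  have f_below: "fls_nth (f i) j = 0" if "j < int i" for i j
    using assms[of i] that by (simp add: val_ge_def)
  have g0: "\<forall>n<0. g n = 0"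
    by (simp add: g_def fls_nth_sum f_below)
  define s where "s = Abs_fls g"
  have s: "fls_nth s j = g j" for j
    unfolding s_def by (rule nth_Abs_fls_lower_bound[OF g0])
  have conv: "val_tendsto (\<lambda>n. \<Sum>i<n. f i) s"
    unfolding val_tendsto_def
  proof
    fix N
    have "val_ge N ((\<Sum>i<n. f i) - s)" if "n \<ge> Suc (nat N)" for n
      unfolding val_ge_def
    proof (intro allI impI)
      fix j assume j: "j < N"
      show "fls_nth ((\<Sum>i<n. f i) - s) j = 0"
      proof (cases "j < 0")
        case True
        thus ?thesis
          using g0 by (simp add: s fls_nth_sum f_below)
      next
        case False
        have "fls_nth (\<Sum>i<n. f i) j = (\<Sum>i<Suc (nat j). fls_nth (f i) j)"
          unfolding fls_nth_sum by (rule sum.mono_neutral_right) (use that j False f_below in auto)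
        thus ?thesis
          by (simp add: s g_def fls_nth_sum)
      qed
    qed
    thus "\<exists>M. \<forall>n\<ge>M. val_ge N ((\<Sum>i<n. f i) - s)"
      by blast
  qed
  hence "(\<Sum>i. f i) = s"
    by (intro sums_unique[symmetric]) (simp add: sums_def val_tendsto_LIMSEQ)
  thus ?thesis
    using conv by simp
qed

section \<open>Convergence of the zeta values\<close>

lemma fls_subdegree_A_to_Kinf:
  assumes "a \<noteq> 0"
  shows "fls_subdegree (A_to_Kinf a :: 'a::field fls) = - int (degree a)"
proof (rule fls_subdegree_eqI)
  have nth: "fls_nth (A_to_Kinf a :: 'a fls) k = (\<Sum>i\<le>degree a. if k = - int i then coeff a i else 0)" for k
    by (auto simp: A_to_Kinf_def fls_nth_sum theta_def intro!: sum.cong)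
  show "fls_nth (A_to_Kinf a :: 'a fls) (- int (degree a)) \<noteq> 0"
    using assms by (simp add: nth sum.delta')
  show "fls_nth (A_to_Kinf a :: 'a fls) k = 0" if "k < - int (degree a)" for k
    using that by (auto simp: nth intro!: sum.neutral)
qed

lemma val_ge_pow_sum:
  assumes "0 < n"
  shows "val_ge (int d) (pow_sum n d :: 'a::{finite,field} fls)"
  unfolding pow_sum_def
proof (rule val_ge_sum)
  fix a :: "'a poly"
  assume a: "a \<in> monic_deg d"
  hence "a \<noteq> 0" "degree a = d"
    by (auto simp: monic_deg_def)
  hence "val_ge (int d) (inverse (A_to_Kinf a :: 'a fls))"
    by (simp add: val_ge_iff_subdegree A_to_Kinf_monic_nonzero[OF a] fls_subdegree_A_to_Kinf)
  hence "val_ge (int n * int d) (inverse (A_to_Kinf a :: 'a fls) ^ n)"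
    by (rule val_ge_power)
  thus "val_ge (int d) (inverse (A_to_Kinf a :: 'a fls) ^ n)"
    using assms by (elim val_ge_mono) (simp add: mult_le_cancel_right1)
qed

lemma val_ge_0_pow_sum:
  assumes "0 < n"
  shows "val_ge 0 (pow_sum n d :: 'a::{finite,field} fls)"
proof -
  have "val_ge (int d) (pow_sum n d :: 'a fls)"
    using assms by (rule val_ge_pow_sum)
  thus ?thesis
    by (rule val_ge_mono) simp
qed

lemma val_ge_0_sum_pow_sum: "0 < n \<Longrightarrow> val_ge 0 (\<Sum>e\<in>E. pow_sum n e :: 'a::{finite,field} fls)"
  by (intro val_ge_sum val_ge_0_pow_sum)

lemma val_tendsto_zetaC: "0 < n \<Longrightarrow> val_tendsto (\<lambda>N. \<Sum>d<N. pow_sum n d) (zetaC n :: 'a::{finite,field} fls)"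
  unfolding zetaC_def by (intro val_tendsto_suminf val_ge_pow_sum)

lemma val_tendsto_pow_sum_mult:
  assumes "0 < m" "\<And>d. val_ge 0 (P d)"
  shows "val_tendsto (\<lambda>N. \<Sum>d<N. pow_sum m d * P d) (\<Sum>d. pow_sum m d * P d :: 'a::{finite,field} fls)"
proof (rule val_tendsto_suminf)
  fix d
  show "val_ge (int d) (pow_sum m d * P d)"
    using val_ge_mult[OF val_ge_pow_sum[OF assms(1)] assms(2)] by simp
qed

lemma sum_lessThan_mult_sum_lessThan:
  fixes s t :: "nat \<Rightarrow> 'b::comm_ring"
  shows "(\<Sum>d<n. s d) * (\<Sum>d<n. t d)
    = (\<Sum>d<n. s d * (\<Sum>e<d. t e)) + (\<Sum>d<n. t d * (\<Sum>e<d. s e)) + (\<Sum>d<n. s d * t d)"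
  by (induction n) (simp_all add: algebra_simps)

lemma zetaC_mult:
  assumes "0 < m" "0 < n"
  shows "zetaC m * zetaC n
    = zetaC2 m n + zetaC2 n m + (\<Sum>d. pow_sum m d * pow_sum n d :: 'a::{finite,field} fls)"
proof -
  have Zn: "val_tendsto (\<lambda>N. \<Sum>d<N. pow_sum n d) (zetaC n :: 'a fls)"
    using assms(2) by (rule val_tendsto_zetaC)
  have "val_ge 0 (zetaC n :: 'a fls)"
    by (rule val_ge_limit[OF Zn val_ge_0_sum_pow_sum[OF assms(2)]])
  hence "val_tendsto (\<lambda>N. (\<Sum>d<N. pow_sum m d) * (\<Sum>d<N. pow_sum n d)) (zetaC m * zetaC n :: 'a fls)"
    by (intro val_tendsto_mult[OF val_tendsto_zetaC Zn] val_ge_0_sum_pow_sum assms)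
  moreover have "val_tendsto (\<lambda>N. (\<Sum>d<N. pow_sum m d) * (\<Sum>d<N. pow_sum n d))
      (zetaC2 m n + zetaC2 n m + (\<Sum>d. pow_sum m d * pow_sum n d :: 'a fls))"
    unfolding sum_lessThan_mult_sum_lessThan zetaC2_def
    by (intro val_tendsto_add val_tendsto_pow_sum_mult val_ge_0_sum_pow_sum val_ge_0_pow_sum assms)
  ultimately show ?thesis
    by (rule val_tendsto_unique)
qed

lemma zetaC2_star_eq:
  assumes "0 < m" "0 < n"
  shows "zetaC2_star m n = zetaC2 m n + (\<Sum>d. pow_sum m d * pow_sum n d :: 'a::{finite,field} fls)"
proof -
  have "(\<Sum>d<N. pow_sum m d * (\<Sum>e\<le>d. pow_sum n e))
      = (\<Sum>d<N. pow_sum m d * (\<Sum>e<d. pow_sum n e)) + (\<Sum>d<N. pow_sum m d * pow_sum n d :: 'a fls)" for N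
    by (simp add: lessThan_Suc_atMost[symmetric] distrib_left sum.distrib)
  hence "val_tendsto (\<lambda>N. \<Sum>d<N. pow_sum m d * (\<Sum>e\<le>d. pow_sum n e))
      (zetaC2 m n + (\<Sum>d. pow_sum m d * pow_sum n d :: 'a fls))"
    unfolding zetaC2_def
    by (simp only:) (intro val_tendsto_add val_tendsto_pow_sum_mult val_ge_0_sum_pow_sum val_ge_0_pow_sum assms)
  moreover have "val_tendsto (\<lambda>N. \<Sum>d<N. pow_sum m d * (\<Sum>e\<le>d. pow_sum n e)) (zetaC2_star m n :: 'a fls)"
    unfolding zetaC2_star_def by (intro val_tendsto_pow_sum_mult val_ge_0_sum_pow_sum assms)
  ultimately show ?thesis
    by (rule val_tendsto_unique[symmetric])
qed

section \<open>The values \<open>\<zeta>\<^sub>C(q)\<close> and \<open>\<zeta>\<^sub>C(1, q - 1)\<close>\<close>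

lemma pow_sum_CARD_minus_1_mult_pow_sum_one:
  "pow_sum (CARD('a) - 1) d * pow_sum 1 d = (pow_sum CARD('a) d :: 'a::{finite,field} fls)"
  using CARD_field_ge_2[where 'a='a] power_minus_mult[of "CARD('a)" "pow_sum 1 d :: 'a fls"]
  unfolding pow_sum_CARD_minus_1 pow_sum_CARD by simp

lemma zetaC_CARD: "zetaC CARD('a) = (zetaC 1 ^ CARD('a) :: 'a::{finite,field} fls)"
proof -
  have "val_tendsto (\<lambda>N. (\<Sum>d<N. pow_sum 1 d) ^ CARD('a)) (zetaC 1 ^ CARD('a) :: 'a fls)"
    by (intro val_tendsto_frob val_tendsto_zetaC) simp
  hence "val_tendsto (\<lambda>N. \<Sum>d<N. pow_sum CARD('a) d) (zetaC 1 ^ CARD('a) :: 'a fls)"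
    by (simp add: frob_sum pow_sum_CARD)
  moreover have "val_tendsto (\<lambda>N. \<Sum>d<N. pow_sum CARD('a) d) (zetaC CARD('a) :: 'a fls)"
    using CARD_field_ge_2[where 'a='a] by (intro val_tendsto_zetaC) simp
  ultimately show ?thesis
    by (rule val_tendsto_unique[symmetric])
qed

lemma carlitz_bracket_Suc_Suc:
  "carlitz_bracket (Suc (Suc d)) = carlitz_bracket (Suc d) ^ CARD('a) + (carlitz_bracket 1 :: 'a::{finite,field} fls)"
  by (simp add: carlitz_bracket_def frob_diff mult.commute flip: power_mult)

lemma pow_sum_CARD_minus_1_Suc:
  "pow_sum (CARD('a) - 1) (Suc d) = pow_sum (CARD('a) - 1) d / (carlitz_bracket (Suc d) :: 'a::{finite,field} fls) ^ (CARD('a) - 1)"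
  unfolding pow_sum_CARD_minus_1 pow_sum_one_Suc power_divide uminus_power_CARD_minus_1 ..

lemma sum_pow_sum_CARD_minus_1:
  "(\<Sum>e\<le>d. pow_sum (CARD('a) - 1) e)
     = pow_sum (CARD('a) - 1) d * carlitz_bracket (Suc d) / (carlitz_bracket 1 :: 'a::{finite,field} fls)"
proof (induction d)
  case 0
  thus ?case
    using carlitz_bracket_nonzero[of 1, where 'a='a] by (simp add: pow_sum_CARD_minus_1 pow_sum_one_0)
next
  case (Suc d)
  define B where "B = (carlitz_bracket (Suc d) :: 'a fls)"
  define B1 where "B1 = (carlitz_bracket 1 :: 'a fls)"
  have B: "B \<noteq> 0" "B1 \<noteq> 0"
    by (simp_all add: B_def B1_def carlitz_bracket_nonzero)
  have B_q: "B ^ CARD('a) = B ^ (CARD('a) - 1) * B"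
    using power_minus_mult[of "CARD('a)" B] CARD_field_ge_2[where 'a='a] by simp
  have "(\<Sum>e\<le>Suc d. pow_sum (CARD('a) - 1) e)
      = pow_sum (CARD('a) - 1) d * B / B1 + pow_sum (CARD('a) - 1) d / B ^ (CARD('a) - 1)"
    by (simp only: sum.atMost_Suc Suc.IH pow_sum_CARD_minus_1_Suc B_def B1_def)
  also have "\<dots> = pow_sum (CARD('a) - 1) d / B ^ (CARD('a) - 1) * (B ^ CARD('a) + B1) / B1"
    using B by (simp add: B_q field_simps)
  also have "\<dots> = pow_sum (CARD('a) - 1) (Suc d) * carlitz_bracket (Suc (Suc d)) / carlitz_bracket 1"
    by (simp only: pow_sum_CARD_minus_1_Suc carlitz_bracket_Suc_Suc B_def B1_def)
  finally show ?case .
qed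

lemma pow_sum_one_Suc_mult_sum:
  "pow_sum 1 (Suc d) * (\<Sum>e\<le>d. pow_sum (CARD('a) - 1) e)
     = pow_sum CARD('a) d / (theta - theta ^ CARD('a) :: 'a::{finite,field} fls)"
proof -
  have "theta - theta ^ CARD('a) = - (carlitz_bracket 1 :: 'a fls)"
    by (simp add: carlitz_bracket_def)
  moreover have "carlitz_bracket (Suc d) \<noteq> (0 :: 'a fls)"
    by (simp add: carlitz_bracket_nonzero)
  ultimately show ?thesis
    unfolding sum_pow_sum_CARD_minus_1 pow_sum_one_Suc
    by (simp add: divide_inverse mult_ac flip: pow_sum_CARD_minus_1_mult_pow_sum_one)
qed

lemma val_ge_0_inverse_theta_diff: "val_ge 0 (inverse (theta - theta ^ CARD('a)) :: 'a::{finite,field} fls)"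
proof -
  have nz: "theta - theta ^ CARD('a) \<noteq> (0 :: 'a fls)"
    using carlitz_bracket_nonzero[of 1, where 'a='a] by (simp add: carlitz_bracket_def)
  have "fls_nth (theta - theta ^ CARD('a) :: 'a fls) (- int CARD('a)) \<noteq> 0"
    using CARD_field_ge_2[where 'a='a] by (simp add: theta_def)
  hence "fls_subdegree (theta - theta ^ CARD('a) :: 'a fls) \<le> 0"
    by (rule fls_subdegree_leI') simp
  thus ?thesis
    using nz by (simp add: val_ge_iff_subdegree)
qed

lemma zetaC2_one_CARD_minus_1:
  "zetaC2 1 (CARD('a) - 1) = zetaC 1 ^ CARD('a) / (theta - theta ^ CARD('a) :: 'a::{finite,field} fls)"
proof -
  define \<kappa> where "\<kappa> = inverse (theta - theta ^ CARD('a) :: 'a fls)"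
  define S where "S N = (\<Sum>i<N. pow_sum 1 i * (\<Sum>e<i. pow_sum (CARD('a) - 1) e :: 'a fls))" for N
  have q: "0 < CARD('a)" "0 < CARD('a) - 1"
    using CARD_field_ge_2[where 'a='a] by simp_all
  have "S (Suc N) = \<kappa> * (\<Sum>i<N. pow_sum CARD('a) i)" for N
    unfolding S_def sum.lessThan_Suc_shift[of _ N]
    unfolding lessThan_Suc_atMost pow_sum_one_Suc_mult_sum \<kappa>_def
    by (simp add: sum_distrib_left divide_inverse_commute)
  moreover have Z: "val_tendsto (\<lambda>N. \<Sum>i<N. pow_sum CARD('a) i) (zetaC CARD('a) :: 'a fls)"
    using q(1) by (rule val_tendsto_zetaC)
  moreover have "val_ge 0 (zetaC CARD('a) :: 'a fls)"
    by (rule val_ge_limit[OF Z val_ge_0_sum_pow_sum[OF q(1)]])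
  ultimately have "val_tendsto (\<lambda>N. S (Suc N)) (\<kappa> * zetaC CARD('a))"
    by (simp add: val_tendsto_mult[OF val_tendsto_const Z] \<kappa>_def val_ge_0_inverse_theta_diff)
  hence "val_tendsto S (\<kappa> * zetaC CARD('a))"
    by (rule val_tendsto_shift)
  moreover have "val_tendsto S (zetaC2 1 (CARD('a) - 1))"
    unfolding S_def zetaC2_def using val_ge_0_sum_pow_sum[OF q(2)] by (rule val_tendsto_pow_sum_mult[rotated]) simp
  ultimately have "\<kappa> * zetaC CARD('a) = zetaC2 1 (CARD('a) - 1)"
    by (rule val_tendsto_unique)
  thus ?thesis
    by (simp add: zetaC_CARD \<kappa>_def divide_inverse_commute)
qed

theorem mainTheorem16:
  assumes "card (UNIV :: 'a::{finite,field} set) > 2"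
  shows "(zetaC2_star (card (UNIV :: 'a set) - 1) 1 :: 'a fls) = zetaC2 (card (UNIV :: 'a set) - 1) 1 + zetaC 1 ^ card (UNIV :: 'a set)
    \<and> zetaC2 (card (UNIV :: 'a set) - 1) 1 + zetaC 1 ^ card (UNIV :: 'a set)
        = (zetaC 1 * zetaC (card (UNIV :: 'a set) - 1) - zetaC2 1 (card (UNIV :: 'a set) - 1) :: 'a fls)
    \<and> (zetaC 1 * zetaC (card (UNIV :: 'a set) - 1) - zetaC2 1 (card (UNIV :: 'a set) - 1) :: 'a fls)
        = zetaC 1 * (zetaC (card (UNIV :: 'a set) - 1) - zetaC 1 ^ (card (UNIV :: 'a set) - 1) / (theta - theta ^ card (UNIV :: 'a set)))
    \<and> (zetaC2_star (card (UNIV :: 'a set) - 1) 1 :: 'a fls)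
        = (\<Sum>d. skew_eval (skew_sum (\<lambda>a.
              skew_scal (inverse (A_to_Kinf a) ^ card (UNIV :: 'a set)) (carlitz a)) (monic_deg d :: 'a poly set)))"
proof -
  let ?q = "CARD('a)"
  have q: "0 < ?q - 1"
    using CARD_field_ge_2[where 'a='a] by simp
  have diagonal: "(\<Sum>d. pow_sum (?q - 1) d * pow_sum 1 d) = (zetaC 1 ^ ?q :: 'a fls)"
    unfolding pow_sum_CARD_minus_1_mult_pow_sum_one zetaC_CARD[symmetric] by (simp only: zetaC_def)
  have star: "zetaC2_star (?q - 1) 1 = zetaC2 (?q - 1) 1 + (zetaC 1 ^ ?q :: 'a fls)"
    using zetaC2_star_eq[OF q, of 1, where 'a='a, unfolded diagonal] by simp
  have shuffle: "zetaC 1 * zetaC (?q - 1) = zetaC2 1 (?q - 1) + zetaC2 (?q - 1) 1 + (zetaC 1 ^ ?q :: 'a fls)"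
    using zetaC_mult[OF q, of 1, where 'a='a, unfolded diagonal] by (simp add: mult.commute add_ac)
  have power: "zetaC 1 * zetaC 1 ^ (?q - 1) = (zetaC 1 ^ ?q :: 'a fls)"
    using CARD_field_ge_2[where 'a='a] power_minus_mult[of ?q "zetaC 1 :: 'a fls"] by (simp add: mult.commute)
  have carlitz: "(\<Sum>d. skew_eval (skew_sum (\<lambda>a. skew_scal (inverse (A_to_Kinf a) ^ ?q) (carlitz a))
      (monic_deg d :: 'a poly set))) = zetaC2_star (?q - 1) 1"
    unfolding zetaC2_star_def skew_eval_sum_monic sum_monic_carlitz_eval_one ..
  show ?thesis
    using star shuffle power carlitz zetaC2_one_CARD_minus_1[where 'a='a]
    by (simp add: right_diff_distrib divide_inverse mult.assoc)
qed

end
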